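(* Let $k$ be a field and let $A = H_{\bullet}(\overline{M}_{0,5})$ be the homology ring (isomorphic to the Chow ring) of the moduli space $\overline{M}_{0,5}$ of stable $5$-pointed curves of genus zero, graded so that the classes $D^S$ of boundary divisors have degree $1$. Then $A$ is a Koszul algebra.
   Context: By Keel's presentation, for $n\ge 4$ the ring $H_{\bullet}(\overline{M}_{0,n})$ is the commutative graded $k$-algebra generated in degree $1$ by variables $D^S$, indexed by subsets $S\subset\{1,\dots,n\}$ with $|S|\ge 2$ and $|S^C|\ge 2$, with $D^S=D^{S^C}$, subject to the relations: (1) for any four distinct $i,j,k,l\in\{1,\dots,n\}$, $\sum_{i,j\in S,\,k,l\notin S} D^S=\sum_{i,k\in S,\,j,l\notin S} D^S=\sum_{i,l\in S,\,j,k\notin S} D^S$; (2) $D^SD^T=0$ unless $S\subset T$, $T\subset S$, $S\subset T^C$, or $T^C\subset S$. A quadratic graded algebra is Koszul if its trivial module $k$ admits a linear graded free resolution. *)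

theory Defs
  imports Main "HOL-Library.Poly_Mapping"
begin

text \<open>Polynomials over a coefficient ring 'k in commuting variables X_S, S :: nat set.
  A monomial is a finitely supported exponent vector (nat set =>0 nat).\<close>

type_synonym 'k kpoly = "(nat set \<Rightarrow>\<^sub>0 nat) \<Rightarrow>\<^sub>0 'k"

definition var :: "nat set \<Rightarrow> 'k::comm_ring_1 kpoly" where
  "var S = Poly_Mapping.single (Poly_Mapping.single S 1) 1"

definition mdeg :: "(nat set \<Rightarrow>\<^sub>0 nat) \<Rightarrow> nat" where
  "mdeg m = (\<Sum>S\<in>Poly_Mapping.keys m. Poly_Mapping.lookup m S)"

definition linear_form :: "'k::comm_ring_1 kpoly \<Rightarrow> bool" where
  "linear_form p \<longleftrightarrow> (\<forall>m\<in>Poly_Mapping.keys p. mdeg m = 1)"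

inductive_set ideal_gen :: "'a::comm_ring_1 set \<Rightarrow> 'a set" for G where
  zero: "0 \<in> ideal_gen G"
| base: "g \<in> G \<Longrightarrow> g \<in> ideal_gen G"
| add: "x \<in> ideal_gen G \<Longrightarrow> y \<in> ideal_gen G \<Longrightarrow> x + y \<in> ideal_gen G"
| mult: "x \<in> ideal_gen G \<Longrightarrow> r * x \<in> ideal_gen G"

definition bdiv :: "nat \<Rightarrow> nat set \<Rightarrow> bool" where
  "bdiv n S \<longleftrightarrow> S \<subseteq> {1..n} \<and> 2 \<le> card S \<and> 2 \<le> card ({1..n} - S)"

definition cmpl :: "nat \<Rightarrow> nat set \<Rightarrow> nat set" where
  "cmpl n S = {1..n} - S"

definition keel_sum :: "nat \<Rightarrow> nat \<Rightarrow> nat \<Rightarrow> nat \<Rightarrow> nat \<Rightarrow> 'k::comm_ring_1 kpoly" where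
  "keel_sum n a b c d =
     (\<Sum>S\<in>{S. bdiv n S \<and> a \<in> S \<and> b \<in> S \<and> c \<notin> S \<and> d \<notin> S}. var S)"

text \<open>Generators of the defining ideal of the Keel ring in the polynomial ring on all X_S:
  variables not indexing boundary divisors are killed; D^S = D^{S^C};
  the linear relations (1); the quadratic relations (2).\<close>
definition keel_rels :: "nat \<Rightarrow> 'k::comm_ring_1 kpoly set" where
  "keel_rels n =
     {var S | S. \<not> bdiv n S}
   \<union> {var S - var (cmpl n S) | S. bdiv n S}
   \<union> {keel_sum n i j k l - keel_sum n i k j l | i j k l.
        {i,j,k,l} \<subseteq> {1..n} \<and> card {i,j,k,l} = 4}
   \<union> {keel_sum n i j k l - keel_sum n i l j k | i j k l.
        {i,j,k,l} \<subseteq> {1..n} \<and> card {i,j,k,l} = 4}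
   \<union> {var S * var T | S T. bdiv n S \<and> bdiv n T \<and>
        \<not> (S \<subseteq> T \<or> T \<subseteq> S \<or> S \<subseteq> cmpl n T \<or> cmpl n T \<subseteq> S)}"

definition keel_ideal :: "nat \<Rightarrow> 'k::comm_ring_1 kpoly set" where
  "keel_ideal n = ideal_gen (keel_rels n)"

text \<open>Let A = R / I with R the polynomial ring (standard grading, variables in degree 1) and
  I a homogeneous ideal.  Elements of A and of free A-modules are represented by
  polynomials / vectors of polynomials modulo I.
  A linear graded free resolution of k = A/A_+ is
    ... --> A(-2)^{b 2} --d_2--> A(-1)^{b 1} --d_1--> A^{b 0} = A --> k --> 0,
  where (b 0 = 1) and the matrix of d_{i+1} (given by M i, rows < b i, columns < b (i+1))
  has entries homogeneous of degree 1 (linear forms), and the sequence is exact.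
  Exactness at A means the image of d_1 is the augmentation ideal A_+.\<close>

definition mat_app :: "nat \<Rightarrow> (nat \<Rightarrow> nat \<Rightarrow> 'a::comm_ring_1) \<Rightarrow> (nat \<Rightarrow> 'a) \<Rightarrow> nat \<Rightarrow> 'a" where
  "mat_app ncols M u r = (\<Sum>c<ncols. M r c * u c)"

definition linear_resolution_of_k ::
  "'k::field kpoly set \<Rightarrow> (nat \<Rightarrow> nat) \<Rightarrow> (nat \<Rightarrow> nat \<Rightarrow> nat \<Rightarrow> 'k kpoly) \<Rightarrow> bool" where
  "linear_resolution_of_k I b M \<longleftrightarrow>
     b 0 = 1
   \<and> (\<forall>i r c. r < b i \<and> c < b (Suc i) \<longrightarrow> linear_form (M i r c))
   \<and> (\<forall>f. (\<exists>w. f - mat_app (b 1) (M 0) w 0 \<in> I) \<longleftrightarrow>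
           (\<exists>g. f - g \<in> I \<and> Poly_Mapping.lookup g 0 = 0))
   \<and> (\<forall>i u. (\<forall>r<b i. mat_app (b (Suc i)) (M i) u r \<in> I) \<longrightarrow>
           (\<exists>w. \<forall>j<b (Suc i). u j - mat_app (b (Suc (Suc i))) (M (Suc i)) w j \<in> I))
   \<and> (\<forall>i w r. r < b i \<longrightarrow>
        mat_app (b (Suc i)) (M i) (mat_app (b (Suc (Suc i))) (M (Suc i)) w) r \<in> I)"

definition koszul :: "'k::field kpoly set \<Rightarrow> bool" where
  "koszul I \<longleftrightarrow> (\<exists>b M. linear_resolution_of_k I b M)"

end

theory Submission
  imports Defs
begin

text \<open>The homology ring \<open>A\<close> of \<open>M\<^sub>0\<^sub>,\<^sub>5\<close> is \<open>k \<oplus> V \<oplus> k\<close>: \<open>V = A\<^sub>1\<close> is five-dimensional and the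
  product of two divisor classes is their intersection number times the class of a point, for a
  nondegenerate intersection form on \<open>V\<close>. Evaluating Keel's generators at their classes is onto
  \<open>A\<close>, and its kernel is exactly Keel's ideal: the linear relations cut the ten classes \<open>D\<^bsup>{a,b}\<^esup>\<close>
  down to five, and the relations already force every product of two of them to be a multiple of
  one point class and every product of three to vanish.

  The quadratic dual \<open>A\<^sup>!\<close> is the free algebra on \<open>\<xi>\<^sub>0, \<dots>, \<xi>\<^sub>4\<close> modulo the single relation
  \<open>\<Sum> gram x y \<xi>\<^sub>x \<xi>\<^sub>y\<close>. Rewriting its leading word \<open>\<xi>\<^sub>0\<xi>\<^sub>1\<close> gives normal forms that respect the
  relation, so the Koszul complex \<open>A \<otimes> (A\<^sup>!)\<^sup>*\<close> has bases indexed by normal words, and its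
  differentials are matrices of linear forms. It is exact: a cycle is hit by the chain that copies
  its linear part into scalar parts and corrects its top part in the \<open>\<xi>\<^sub>2\<close>-direction. Hence it is a
  linear free resolution of \<open>k\<close>.\<close>

section \<open>The algebra \<open>k \<oplus> V \<oplus> k\<close> of a quadratic space\<close>

text \<open>\<open>Chow c v\<^sub>0 \<dots> v\<^sub>4 t\<close> stands for \<open>c + \<Sum> v\<^sub>x gen x + t point\<close>, with \<open>gen x * gen y = gram x y point\<close>
  for the intersection form of signature \<open>(1, 4)\<close> written in a basis where it is a hyperbolic plane
  plus three negative squares.\<close>

datatype 'k chow = Chow (scal: 'k) (v0: 'k) (v1: 'k) (v2: 'k) (v3: 'k) (v4: 'k) (top: 'k)

definition form :: "'k::comm_ring_1 chow \<Rightarrow> 'k chow \<Rightarrow> 'k" where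
  "form a b = v0 a * v1 b + v1 a * v0 b - v2 a * v2 b - v3 a * v3 b - v4 a * v4 b"

instantiation chow :: (comm_ring_1) comm_ring_1
begin

definition "0 = Chow 0 0 0 0 0 0 0"
definition "1 = Chow 1 0 0 0 0 0 0"
definition "a + b = Chow (scal a + scal b) (v0 a + v0 b) (v1 a + v1 b) (v2 a + v2 b)
  (v3 a + v3 b) (v4 a + v4 b) (top a + top b)"
definition "a - b = Chow (scal a - scal b) (v0 a - v0 b) (v1 a - v1 b) (v2 a - v2 b)
  (v3 a - v3 b) (v4 a - v4 b) (top a - top b)"
definition "- a = Chow (- scal a) (- v0 a) (- v1 a) (- v2 a) (- v3 a) (- v4 a) (- top a)"
definition "a * b = Chow (scal a * scal b)
  (scal a * v0 b + v0 a * scal b) (scal a * v1 b + v1 a * scal b) (scal a * v2 b + v2 a * scal b)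
  (scal a * v3 b + v3 a * scal b) (scal a * v4 b + v4 a * scal b)
  (scal a * top b + top a * scal b + form a b)"

instance
  by standard (auto simp: zero_chow_def one_chow_def plus_chow_def minus_chow_def uminus_chow_def
      times_chow_def form_def algebra_simps intro: chow.expand)

end

lemma chow_sel_simps [simp]:
  "scal (x + y) = scal x + scal y" "v0 (x + y) = v0 x + v0 y" "v1 (x + y) = v1 x + v1 y"
  "v2 (x + y) = v2 x + v2 y" "v3 (x + y) = v3 x + v3 y" "v4 (x + y) = v4 x + v4 y"
  "top (x + y) = top x + top y"
  "scal (x - y) = scal x - scal y" "v0 (x - y) = v0 x - v0 y" "v1 (x - y) = v1 x - v1 y"
  "v2 (x - y) = v2 x - v2 y" "v3 (x - y) = v3 x - v3 y" "v4 (x - y) = v4 x - v4 y"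
  "top (x - y) = top x - top y"
  "scal (- x) = - scal x" "v0 (- x) = - v0 x" "v1 (- x) = - v1 x" "v2 (- x) = - v2 x"
  "v3 (- x) = - v3 x" "v4 (- x) = - v4 x" "top (- x) = - top x"
  "scal 0 = 0" "v0 0 = 0" "v1 0 = 0" "v2 0 = 0" "v3 0 = 0" "v4 0 = 0" "top 0 = 0"
  "scal 1 = 1" "v0 1 = 0" "v1 1 = 0" "v2 1 = 0" "v3 1 = 0" "v4 1 = 0" "top 1 = 0"
  by (simp_all add: plus_chow_def minus_chow_def uminus_chow_def zero_chow_def one_chow_def)

lemma chow_times_sel [simp]:
  "scal (x * y) = scal x * scal y"
  "v0 (x * y) = scal x * v0 y + v0 x * scal y" "v1 (x * y) = scal x * v1 y + v1 x * scal y"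
  "v2 (x * y) = scal x * v2 y + v2 x * scal y" "v3 (x * y) = scal x * v3 y + v3 x * scal y"
  "v4 (x * y) = scal x * v4 y + v4 x * scal y"
  "top (x * y) = scal x * top y + top x * scal y + form x y"
  by (simp_all add: times_chow_def)

lemma chow_sum_sel [simp]:
  "scal (sum f S) = (\<Sum>i\<in>S. scal (f i))" "v0 (sum f S) = (\<Sum>i\<in>S. v0 (f i))"
  "v1 (sum f S) = (\<Sum>i\<in>S. v1 (f i))" "v2 (sum f S) = (\<Sum>i\<in>S. v2 (f i))"
  "v3 (sum f S) = (\<Sum>i\<in>S. v3 (f i))" "v4 (sum f S) = (\<Sum>i\<in>S. v4 (f i))"
  "top (sum f S) = (\<Sum>i\<in>S. top (f i))"
  by (induction S rule: infinite_finite_induct; simp)+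

lemma chow_eqI:
  "scal x = scal y \<Longrightarrow> v0 x = v0 y \<Longrightarrow> v1 x = v1 y \<Longrightarrow> v2 x = v2 y \<Longrightarrow> v3 x = v3 y \<Longrightarrow>
   v4 x = v4 y \<Longrightarrow> top x = top y \<Longrightarrow> x = y"
  by (rule chow.expand) simp

definition scalar :: "'k::comm_ring_1 \<Rightarrow> 'k chow" where
  "scalar c = Chow c 0 0 0 0 0 0"

lemma scalar_sel [simp]:
  "scal (scalar c) = c" "v0 (scalar c) = 0" "v1 (scalar c) = 0" "v2 (scalar c) = 0"
  "v3 (scalar c) = 0" "v4 (scalar c) = 0" "top (scalar c) = 0"
  by (simp_all add: scalar_def)

lemma form_scalar [simp]: "form (scalar c) x = 0" "form x (scalar c) = 0"
  by (simp_all add: form_def)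

lemma form_add_left: "form (x + y) z = form x z + form y z"
  and form_add_right: "form x (y + z) = form x y + form x z"
  by (simp_all add: form_def algebra_simps)

lemma form_scalar_mult: "form (scalar c * x) y = c * form x y" "form x (scalar c * y) = c * form x y"
  by (simp_all add: form_def algebra_simps)

lemma form_zero: "form 0 y = 0" "form x 0 = 0"
  by (simp_all add: form_def)

lemma scalar_simps [simp]:
  "scalar 0 = 0" "scalar 1 = 1" "scalar (a + b) = scalar a + scalar b"
  "scalar (a * b) = scalar a * scalar b" "scalar (- a) = - scalar a"
  "scalar (a - b) = scalar a - scalar b"
  by (auto intro!: chow_eqI)

lemma scalar_sum: "scalar (sum f S) = (\<Sum>i\<in>S. scalar (f i))"
  by (induction S rule: infinite_finite_induct) simp_all

lemma chow_numeral: "(numeral n :: 'k::comm_ring_1 chow) = scalar (numeral n)"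
proof -
  have "(of_nat m :: 'k chow) = scalar (of_nat m)" for m
    by (induction m) simp_all
  from this[of "numeral n"] show ?thesis by simp
qed

lemma chow_numeral_sel [simp]:
  "scal (numeral n :: 'k::comm_ring_1 chow) = numeral n" "v0 (numeral n :: 'k chow) = 0"
  "v1 (numeral n :: 'k chow) = 0" "v2 (numeral n :: 'k chow) = 0" "v3 (numeral n :: 'k chow) = 0"
  "v4 (numeral n :: 'k chow) = 0" "top (numeral n :: 'k chow) = 0"
  by (simp_all add: chow_numeral)

definition gen :: "nat \<Rightarrow> 'k::comm_ring_1 chow" where
  "gen x = Chow 0 (if x = 0 then 1 else 0) (if x = 1 then 1 else 0) (if x = 2 then 1 else 0)
     (if x = 3 then 1 else 0) (if x = 4 then 1 else 0) 0"

definition coord :: "nat \<Rightarrow> 'k::comm_ring_1 chow \<Rightarrow> 'k" where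
  "coord y a = (if y = 0 then v0 a else if y = 1 then v1 a else if y = 2 then v2 a
     else if y = 3 then v3 a else v4 a)"

definition gram :: "nat \<Rightarrow> nat \<Rightarrow> 'k::comm_ring_1" where
  "gram x y = (if x = 0 \<and> y = 1 \<or> x = 1 \<and> y = 0 then 1 else if x = y \<and> 2 \<le> x then -1 else 0)"

definition point :: "'k::comm_ring_1 chow" where
  "point = Chow 0 0 0 0 0 0 1"

lemma less_5_cases: "(x::nat) < 5 \<Longrightarrow> x = 0 \<or> x = 1 \<or> x = 2 \<or> x = 3 \<or> x = 4"
  by presburger

lemma sum_less_5: "(\<Sum>x<(5::nat). f x) = f 0 + f 1 + f 2 + f 3 + (f 4 :: 'a::comm_monoid_add)"
  by (simp add: eval_nat_numeral lessThan_Suc add_ac)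

lemma gram_sym: "gram x y = gram y x"
  by (auto simp: gram_def)

lemma sum_gram:
  "(\<Sum>x<5. \<Sum>y<5. gram x y * g x y) = g 0 1 + g 1 0 - g 2 2 - g 3 3 - (g 4 4 :: 'k::comm_ring_1)"
  by (simp add: sum_less_5 gram_def)

lemma sum_gram_chow:
  "(\<Sum>x<5. \<Sum>y<5. scalar (gram x y) * g x y) = g 0 1 + g 1 0 - g 2 2 - g 3 3 - (g 4 4 :: 'k::comm_ring_1 chow)"
  by (simp add: sum_less_5 gram_def)

lemma gen_sel [simp]: "scal (gen x) = 0" "top (gen x) = 0"
  by (simp_all add: gen_def)

lemma coord_simps [simp]:
  "coord y (a + b) = coord y a + coord y b" "coord y (a - b) = coord y a - coord y b"
  "coord y (- a) = - coord y a" "coord y 0 = 0" "coord y 1 = 0" "coord y (scalar c) = 0"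
  "coord y (scalar c * a) = c * coord y a"
  "coord y (sum f S) = (\<Sum>i\<in>S. coord y (f i))"
  by (auto simp: coord_def)

lemma coord_mult: "coord y (a * b) = scal a * coord y b + coord y a * scal b"
  by (simp add: coord_def)

lemma coord_gen: "y < 5 \<Longrightarrow> coord y (gen x) = (if y = x then 1 else 0)"
  by (auto simp: coord_def gen_def)

lemma form_gen: "x < 5 \<Longrightarrow> form (gen x) b = (\<Sum>y<5. gram x y * coord y b)"
  by (drule less_5_cases) (auto simp: form_def gen_def sum_less_5 coord_def gram_def)

lemma form_expand: "form a b = (\<Sum>x<5. \<Sum>y<5. gram x y * (coord x a * coord y b))"
  by (simp add: sum_gram coord_def form_def)

lemma gen_mult_gen: "x < 5 \<Longrightarrow> y < 5 \<Longrightarrow> gen x * gen y = scalar (gram x y) * (point :: 'k::comm_ring_1 chow)"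
  by (drule less_5_cases)+
    (elim disjE; simp add: gen_def point_def gram_def form_def times_chow_def scalar_def)

lemma chow_coord_eqI:
  assumes "scal a = scal b" and "\<And>y. y < 5 \<Longrightarrow> coord y a = coord y b" and "top a = top b"
  shows "a = b"
proof -
  have "coord 0 a = coord 0 b" "coord 1 a = coord 1 b" "coord 2 a = coord 2 b"
    "coord 3 a = coord 3 b" "coord 4 a = coord 4 b"
    by (simp_all add: assms(2))
  then show ?thesis
    using assms(1,3) by (intro chow_eqI) (simp_all add: coord_def)
qed

lemma chow_decomp:
  "a = scalar (scal a) + (\<Sum>x<5. scalar (coord x a) * gen x) + scalar (top a) * (point :: 'k::comm_ring_1 chow)"
  by (rule chow_eqI) (simp_all add: sum_less_5 coord_def gen_def point_def)

section \<open>Normal forms in the quadratic dual algebra\<close>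

text \<open>Words in \<open>\<xi>\<^sub>0, \<dots>, \<xi>\<^sub>4\<close> are lists over \<open>{..<5}\<close>, and linear combinations of words are
  coefficient functions \<open>nat list \<Rightarrow> 'k\<close>. The relation is used as the rewriting rule
  \<open>\<xi>\<^sub>0\<xi>\<^sub>1 \<mapsto> - \<xi>\<^sub>1\<xi>\<^sub>0 + \<xi>\<^sub>2\<xi>\<^sub>2 + \<xi>\<^sub>3\<xi>\<^sub>3 + \<xi>\<^sub>4\<xi>\<^sub>4\<close>.\<close>

fun normal :: "nat list \<Rightarrow> bool" where
  "normal (x # y # w) \<longleftrightarrow> \<not> (x = 0 \<and> y = 1) \<and> normal (y # w)"
| "normal _ \<longleftrightarrow> True"

definition words :: "nat \<Rightarrow> nat list set" where
  "words n = {w. length w = n \<and> set w \<subseteq> {..<5}}"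

definition normal_words :: "nat \<Rightarrow> nat list set" where
  "normal_words n = {w. length w = n \<and> set w \<subseteq> {..<5} \<and> normal w}"

lemma finite_words: "finite (words n)"
  using finite_lists_length_eq[of "{..<5::nat}" n] by (simp add: words_def conj_commute)

lemma normal_words_subset_words: "normal_words n \<subseteq> words n"
  by (auto simp: normal_words_def words_def)

lemma finite_normal_words: "finite (normal_words n)"
  using finite_words normal_words_subset_words by (rule finite_subset[rotated])

lemma normal_ConsD: "normal (x # w) \<Longrightarrow> normal w"
  by (cases w) auto

lemma normal_words_0: "normal_words 0 = {[]}"
  by (auto simp: normal_words_def)

lemma Cons_in_normal_words_iff:
  "x # w \<in> normal_words (Suc n) \<longleftrightarrow> x < 5 \<and> w \<in> normal_words n \<and> (x = 0 \<longrightarrow> w = [] \<or> hd w \<noteq> 1)"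
  by (cases w) (auto simp: normal_words_def)

lemma Cons_in_words: "z \<in> words n \<Longrightarrow> x < 5 \<Longrightarrow> x # z \<in> words (Suc n)"
  by (simp add: words_def)

definition delta :: "nat list \<Rightarrow> nat list \<Rightarrow> 'k::comm_ring_1" where
  "delta w z = (if z = w then 1 else 0)"

definition shift :: "nat \<Rightarrow> (nat list \<Rightarrow> 'k::comm_ring_1) \<Rightarrow> nat list \<Rightarrow> 'k" where
  "shift y m z = (case z of [] \<Rightarrow> 0 | y' # z' \<Rightarrow> if y' = y then m z' else 0)"

lemma shift_simps [simp]: "shift y m [] = 0" "shift y m (y' # z) = (if y' = y then m z else 0)"
  by (simp_all add: shift_def)

definition supported_on :: "(nat list \<Rightarrow> 'k::zero) \<Rightarrow> nat list set \<Rightarrow> bool" where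
  "supported_on m S \<longleftrightarrow> (\<forall>z. m z \<noteq> 0 \<longrightarrow> z \<in> S)"

lemma sum_delta_mult: "finite S \<Longrightarrow> (\<Sum>w\<in>S. delta a w * f w) = (if a \<in> S then f a else 0)"
  by (simp add: delta_def if_distrib[of "\<lambda>x. x * _"] sum.delta' cong: if_cong)

lemma sum_scalar_delta_mult:
  "finite S \<Longrightarrow> (\<Sum>w\<in>S. scalar (delta a w) * f w) = (if a \<in> S then f a else (0 :: 'k::comm_ring_1 chow))"
  by (simp add: delta_def if_distrib[of scalar] if_distrib[of "\<lambda>x. x * _"] sum.delta' cong: if_cong)

text \<open>The normal form of \<open>\<xi>\<^sub>x w\<close> for a normal word \<open>w\<close>.\<close>

fun nf_cons :: "nat \<Rightarrow> nat list \<Rightarrow> nat list \<Rightarrow> 'k::comm_ring_1" where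
  "nf_cons x [] = delta [x]"
| "nf_cons x (y # w) = (if x = 0 \<and> y = 1 then
      (\<lambda>z. - shift 1 (nf_cons 0 w) z + delta (2 # 2 # w) z + delta (3 # 3 # w) z + delta (4 # 4 # w) z)
    else delta (x # y # w))"

lemma nf_cons_nonzero: "x \<noteq> 0 \<Longrightarrow> nf_cons x w = delta (x # w)"
  by (cases w) auto

lemma nf_cons_supported:
  "w \<in> normal_words n \<Longrightarrow> x < 5 \<Longrightarrow> supported_on (nf_cons x w :: _ \<Rightarrow> 'k::comm_ring_1) (normal_words (Suc n))"
  unfolding supported_on_def
proof (induction w arbitrary: x n)
  case Nil
  then show ?case by (auto simp: delta_def normal_words_def)
next
  case (Cons y w)
  obtain n' where n: "n = Suc n'" and w: "w \<in> normal_words n'" and y: "y < 5"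
    using Cons.prems(1) by (cases n) (auto simp: normal_words_def dest: normal_ConsD)
  show ?case
  proof (intro allI impI)
    fix z assume z: "nf_cons x (y # w) z \<noteq> (0::'k)"
    show "z \<in> normal_words (Suc n)"
    proof (cases "x = 0 \<and> y = 1")
      case True
      then consider z' where "z = 1 # z'" "nf_cons 0 w z' \<noteq> (0::'k)" | l where "l \<in> {2, 3, 4}" "z = l # l # w"
        using z by (cases z) (auto simp: delta_def split: if_splits)
      then show ?thesis
      proof cases
        case 1
        then show ?thesis using Cons.IH[OF w, of 0] n by (auto simp: Cons_in_normal_words_iff)
      next
        case 2
        then show ?thesis using w n by (auto simp: Cons_in_normal_words_iff)
      qed
    next
      case False
      then show ?thesis
        using z Cons.prems n by (auto simp: delta_def Cons_in_normal_words_iff split: if_splits)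
    qed
  qed
qed

definition nf_cons_comb :: "nat \<Rightarrow> nat \<Rightarrow> (nat list \<Rightarrow> 'k::comm_ring_1) \<Rightarrow> nat list \<Rightarrow> 'k" where
  "nf_cons_comb x n m z = (\<Sum>w\<in>normal_words n. m w * nf_cons x w z)"

fun nf :: "nat list \<Rightarrow> nat list \<Rightarrow> 'k::comm_ring_1" where
  "nf [] = delta []"
| "nf (x # z) = nf_cons_comb x (length z) (nf z)"

lemma nf_cons_comb_supported:
  assumes "x < 5"
  shows "supported_on (nf_cons_comb x n m) (normal_words (Suc n))"
proof -
  have "nf_cons x w z = 0" if "w \<in> normal_words n" "z \<notin> normal_words (Suc n)" for w z
    using nf_cons_supported[OF that(1) assms] that(2) by (auto simp: supported_on_def)
  then show ?thesis
    unfolding supported_on_def nf_cons_comb_def by (metis (mono_tags) mult_zero_right sum.neutral)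
qed

lemma nf_supported: "set z \<subseteq> {..<5} \<Longrightarrow> supported_on (nf z) (normal_words (length z))"
proof (induction z)
  case (Cons a z)
  then show ?case using nf_cons_comb_supported[of a "length z" "nf z"] by simp
qed (simp add: supported_on_def delta_def normal_words_0)

lemma nf_cons_comb_delta: "w \<in> normal_words n \<Longrightarrow> nf_cons_comb x n (delta w) = nf_cons x w"
  by (rule ext) (simp add: nf_cons_comb_def sum_delta_mult finite_normal_words)

lemma nf_normal: "w \<in> normal_words n \<Longrightarrow> (nf w :: _ \<Rightarrow> 'k::comm_ring_1) = delta w"
proof (induction w arbitrary: n)
  case (Cons x w)
  from Cons.prems obtain n' where "n = Suc n'" by (cases n) (auto simp: normal_words_def)
  with Cons.prems have w: "w \<in> normal_words n'" and hd: "x = 0 \<longrightarrow> w = [] \<or> hd w \<noteq> 1"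
    by (simp_all add: Cons_in_normal_words_iff)
  have "length w = n'" using w by (simp add: normal_words_def)
  then have "(nf (x # w) :: _ \<Rightarrow> 'k) = nf_cons_comb x n' (delta w)" using Cons.IH[OF w] by simp
  also have "\<dots> = nf_cons x w" by (rule nf_cons_comb_delta[OF w])
  also have "\<dots> = delta (x # w)" using hd by (cases w) auto
  finally show ?case .
qed simp

lemma nf_cons_comb_nonzero:
  assumes "x \<noteq> 0" and "supported_on m (normal_words n)"
  shows "nf_cons_comb x n m = shift x m"
proof
  fix z
  show "nf_cons_comb x n m z = shift x m z"
  proof (cases z)
    case (Cons y z')
    have "nf_cons_comb x n m z = (\<Sum>w\<in>normal_words n. delta z' w * (if y = x then m w else 0))"
      unfolding nf_cons_comb_def nf_cons_nonzero[OF assms(1)] Cons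
      by (rule sum.cong) (auto simp: delta_def)
    then show ?thesis
      using assms(2) Cons by (auto simp: sum_delta_mult finite_normal_words supported_on_def)
  qed (simp add: nf_cons_comb_def nf_cons_nonzero[OF assms(1)] delta_def)
qed

lemma nf_Cons_nonzero: "x \<noteq> 0 \<Longrightarrow> set z \<subseteq> {..<5} \<Longrightarrow> nf (x # z) = shift x (nf z)"
  using nf_cons_comb_nonzero[OF _ nf_supported[of z]] by simp

lemma sum_triple_swap:
  "(\<Sum>x\<in>X. \<Sum>y\<in>Y. b x y * (\<Sum>w\<in>W. a w * e x y w)) =
   (\<Sum>w\<in>W. a w * (\<Sum>x\<in>X. \<Sum>y\<in>Y. b x y * e x y w :: 'k::comm_ring_1))"
proof -
  have "(\<Sum>x\<in>X. \<Sum>y\<in>Y. b x y * (\<Sum>w\<in>W. a w * e x y w)) = (\<Sum>x\<in>X. \<Sum>y\<in>Y. \<Sum>w\<in>W. a w * (b x y * e x y w))"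
    by (simp add: sum_distrib_left mult.left_commute)
  also have "\<dots> = (\<Sum>w\<in>W. \<Sum>x\<in>X. \<Sum>y\<in>Y. a w * (b x y * e x y w))"
    by (subst sum.swap, subst (2) sum.swap) (rule refl)
  finally show ?thesis
    by (simp add: sum_distrib_left)
qed

lemma nf_cons_comb_sum_gram:
  "(\<Sum>x\<in>X. \<Sum>y\<in>Y. b x y * nf_cons_comb a n (g x y) z) =
   nf_cons_comb a n (\<lambda>w. \<Sum>x\<in>X. \<Sum>y\<in>Y. b x y * (g x y w :: 'k::comm_ring_1)) z"
proof -
  have "(\<Sum>x\<in>X. \<Sum>y\<in>Y. b x y * nf_cons_comb a n (g x y) z) =
      (\<Sum>x\<in>X. \<Sum>y\<in>Y. b x y * (\<Sum>w\<in>normal_words n. nf_cons a w z * g x y w))"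
    by (simp add: nf_cons_comb_def mult.commute)
  also have "\<dots> = (\<Sum>w\<in>normal_words n. nf_cons a w z * (\<Sum>x\<in>X. \<Sum>y\<in>Y. b x y * g x y w))"
    by (rule sum_triple_swap)
  finally show ?thesis by (simp add: nf_cons_comb_def mult.commute)
qed

text \<open>The overlap check of the rewriting system: the relation in front of a normal word reduces to zero.\<close>

lemma nf_cons_relation:
  assumes w: "w \<in> normal_words n"
  shows "(\<Sum>x<5. \<Sum>y<5. gram x y * nf_cons_comb x (Suc n) (nf_cons y w) z) = (0::'k::comm_ring_1)"
proof -
  have "supported_on (nf_cons 0 w :: _ \<Rightarrow> 'k) (normal_words (Suc n))"
    using nf_cons_supported[OF w, of 0] by simp
  then have e1: "nf_cons_comb 1 (Suc n) (nf_cons 0 w) = (shift 1 (nf_cons 0 w) :: _ \<Rightarrow> 'k)"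
    by (rule nf_cons_comb_nonzero[rotated]) simp
  have e0: "nf_cons_comb 0 (Suc n) (nf_cons 1 w) = (nf_cons 0 (1 # w) :: _ \<Rightarrow> 'k)"
    using w nf_cons_comb_delta[of "1 # w" "Suc n" 0] by (simp add: nf_cons_nonzero Cons_in_normal_words_iff)
  have el: "nf_cons_comb l (Suc n) (nf_cons l w) = (delta (l # l # w) :: _ \<Rightarrow> 'k)" if "l \<in> {2, 3, 4}" for l
    using that w nf_cons_comb_delta[of "l # w" "Suc n" l] by (auto simp: nf_cons_nonzero Cons_in_normal_words_iff)
  show ?thesis
    unfolding sum_gram e0 e1 el[of 2, simplified] el[of 3, simplified] el[of 4, simplified] by simp
qed

lemma nf_kills_relation:
  "set q \<subseteq> {..<5} \<Longrightarrow> (\<Sum>x<5. \<Sum>y<5. gram x y * nf (p @ x # y # q) v) = (0::'k::comm_ring_1)"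
proof (induction p arbitrary: v)
  case Nil
  let ?n = "length q"
  have "nf (x # y # q) v = (\<Sum>w\<in>normal_words ?n. nf q w * (nf_cons_comb x (Suc ?n) (nf_cons y w) v :: 'k))" for x y
    by (simp add: nf_cons_comb_def sum_distrib_right sum_distrib_left mult.assoc
        sum.swap[of _ "normal_words (Suc ?n)"])
  then have "(\<Sum>x<5. \<Sum>y<5. gram x y * (nf (x # y # q) v :: 'k)) =
      (\<Sum>w\<in>normal_words ?n. nf q w * (\<Sum>x<5. \<Sum>y<5. gram x y * nf_cons_comb x (Suc ?n) (nf_cons y w) v))"
    by (simp add: sum_triple_swap)
  also have "\<dots> = 0" by (simp add: nf_cons_relation)
  finally show ?case by simp
next
  case (Cons a p)
  then show ?case
    by (simp add: nf_cons_comb_sum_gram del: nf_cons_comb_def) (simp add: nf_cons_comb_def)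
qed

section \<open>The Koszul complex\<close>

text \<open>The \<open>n\<close>-th term \<open>chow \<otimes> (A\<^sup>!\<^sub>n)\<^sup>*\<close> of the Koszul complex is modelled by the functions from words
  of length \<open>n\<close> to \<open>chow\<close> that kill the relation of the quadratic dual in every position.\<close>

definition kills_relation :: "(nat list \<Rightarrow> 'k::comm_ring_1 chow) \<Rightarrow> bool" where
  "kills_relation T \<longleftrightarrow> (\<forall>p q. set p \<subseteq> {..<5} \<longrightarrow> set q \<subseteq> {..<5} \<longrightarrow>
      (\<Sum>x<5. \<Sum>y<5. scalar (gram x y) * T (p @ x # y # q)) = 0)"

lemma kills_relationD:
  "kills_relation T \<Longrightarrow> set p \<subseteq> {..<5} \<Longrightarrow> set q \<subseteq> {..<5} \<Longrightarrow>
   (\<Sum>x<5. \<Sum>y<5. scalar (gram x y) * T (p @ x # y # q)) = 0"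
  by (simp add: kills_relation_def)

lemma kills_relation_Cons: "kills_relation T \<Longrightarrow> a < 5 \<Longrightarrow> kills_relation (\<lambda>z. T (a # z))"
  using kills_relationD[of T "a # _"] by (simp add: kills_relation_def)

lemma kills_relation_front:
  assumes "kills_relation T" and "set q \<subseteq> {..<5}"
  shows "T (0 # 1 # q) = - T (1 # 0 # q) + T (2 # 2 # q) + T (3 # 3 # q) + T (4 # 4 # q)"
proof -
  have "(\<Sum>x<5. \<Sum>y<5. scalar (gram x y) * T ([] @ x # y # q)) = 0"
    using kills_relationD[OF assms(1) _ assms(2), of "[]"] by simp
  then show ?thesis
    using sum_gram_chow[of "\<lambda>x y. T (x # y # q)"] by (simp add: algebra_simps eq_neg_iff_add_eq_0)
qed

lemma kills_relation_add: "kills_relation S \<Longrightarrow> kills_relation T \<Longrightarrow> kills_relation (\<lambda>z. S z + T z)"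
  unfolding kills_relation_def by (simp add: distrib_left sum.distrib)

lemma kills_relation_sum:
  "finite J \<Longrightarrow> (\<And>j. j \<in> J \<Longrightarrow> kills_relation (T j)) \<Longrightarrow> kills_relation (\<lambda>z. \<Sum>j\<in>J. T j z)"
  unfolding kills_relation_def by (simp add: sum_distrib_left sum.swap[of _ J])

lemma kills_relation_scalar:
  assumes "\<And>p q. set p \<subseteq> {..<5} \<Longrightarrow> set q \<subseteq> {..<5} \<Longrightarrow>
    (\<Sum>x<5. \<Sum>y<5. gram x y * f (p @ x # y # q)) = (0::'k::comm_ring_1)"
  shows "kills_relation (\<lambda>z. scalar (f z))"
  using assms by (simp add: kills_relation_def flip: scalar_simps scalar_sum)

lemma kills_relation_nf: "kills_relation (\<lambda>z. scalar (nf z w) * (a :: 'k::comm_ring_1 chow))"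
proof -
  have "kills_relation (\<lambda>z. scalar (nf z w :: 'k))"
    by (rule kills_relation_scalar) (rule nf_kills_relation)
  moreover have "(\<Sum>x<5. \<Sum>y<5. scalar (gram x y) * (scalar (nf (p @ x # y # q) w) * a)) =
      (\<Sum>x<5. \<Sum>y<5. scalar (gram x y) * scalar (nf (p @ x # y # q) w)) * a" for p q
    by (simp add: sum_distrib_right mult.assoc)
  ultimately show ?thesis
    by (simp add: kills_relation_def)
qed

lemma sum_normal_words_shift:
  assumes "y \<noteq> 0" "y < 5" and "supported_on m (normal_words n)"
  shows "(\<Sum>w\<in>normal_words (Suc n). scalar (shift y m w) * f w) =
    (\<Sum>w\<in>normal_words n. scalar (m w) * (f (y # w) :: 'k::comm_ring_1 chow))"
proof -
  have sub: "(#) y ` normal_words n \<subseteq> normal_words (Suc n)"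
    using assms(1,2) by (auto simp: Cons_in_normal_words_iff)
  have "(\<Sum>w\<in>normal_words n. scalar (m w) * f (y # w)) =
      (\<Sum>w\<in>(#) y ` normal_words n. scalar (shift y m w) * f w)"
    by (subst sum.reindex) auto
  also have "\<dots> = (\<Sum>w\<in>normal_words (Suc n). scalar (shift y m w) * f w)"
  proof (rule sum.mono_neutral_left[OF finite_normal_words sub], intro ballI)
    fix w assume w: "w \<in> normal_words (Suc n) - (#) y ` normal_words n"
    then obtain a v where "w = a # v" "v \<in> normal_words n"
      by (cases w) (auto simp: normal_words_def dest: normal_ConsD)
    then show "scalar (shift y m w) * f w = 0" using w by auto
  qed
  finally show ?thesis by simp
qed

lemma kills_relation_nf_cons:
  "kills_relation (T :: nat list \<Rightarrow> 'k::comm_ring_1 chow) \<Longrightarrow> w \<in> normal_words n \<Longrightarrow> x < 5 \<Longrightarrow>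
   T (x # w) = (\<Sum>v\<in>normal_words (Suc n). scalar (nf_cons x w v) * T v)"
proof (induction w arbitrary: T x n)
  case Nil
  then have "[x] \<in> normal_words (Suc n)" by (simp add: normal_words_def)
  then show ?case by (simp add: sum_scalar_delta_mult finite_normal_words)
next
  case (Cons y w)
  from Cons.prems(2) obtain n' where n: "n = Suc n'" by (cases n) (auto simp: normal_words_def)
  with Cons.prems(2) have w: "w \<in> normal_words n'" and y: "y < 5"
    by (simp_all add: Cons_in_normal_words_iff)
  show ?case
  proof (cases "x = 0 \<and> y = 1")
    case True
    let ?S = "\<lambda>g. \<Sum>v\<in>normal_words (Suc n). scalar (g v) * T v"
    have "?S (shift 1 (nf_cons 0 w)) = (\<Sum>v\<in>normal_words n. scalar (nf_cons 0 w v) * T (1 # v))"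
      using nf_cons_supported[OF w, of 0] n by (intro sum_normal_words_shift) auto
    also have "\<dots> = T (1 # 0 # w)"
      using Cons.IH[OF kills_relation_Cons[OF Cons.prems(1), of 1] w, of 0] n by simp
    moreover have "?S (nf_cons x (y # w)) =
        - ?S (shift 1 (nf_cons 0 w)) + ?S (delta (2 # 2 # w)) + ?S (delta (3 # 3 # w))
        + ?S (delta (4 # 4 # w))"
      using True by (simp add: sum.distrib sum_negf sum_subtractf distrib_right left_diff_distrib)
    ultimately have "?S (nf_cons x (y # w)) = - T (1 # 0 # w) + T (2 # 2 # w) + T (3 # 3 # w) + T (4 # 4 # w)"
      using w n by (simp add: sum_scalar_delta_mult finite_normal_words Cons_in_normal_words_iff)
    also have "\<dots> = T (x # y # w)"
      using True kills_relation_front[OF Cons.prems(1)] w by (simp add: normal_words_def)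
    finally show ?thesis ..
  next
    case False
    then have "x # y # w \<in> normal_words (Suc n)" using Cons.prems n by (auto simp: Cons_in_normal_words_iff)
    moreover have "(nf_cons x (y # w) :: _ \<Rightarrow> 'k) = delta (x # y # w)" using False by auto
    ultimately show ?thesis by (simp add: sum_scalar_delta_mult finite_normal_words)
  qed
qed

lemma kills_relation_nf_expansion:
  "kills_relation (T :: nat list \<Rightarrow> 'k::comm_ring_1 chow) \<Longrightarrow> set z \<subseteq> {..<5} \<Longrightarrow>
   T z = (\<Sum>w\<in>normal_words (length z). scalar (nf z w) * T w)"
proof (induction z arbitrary: T)
  case Nil
  then show ?case by (simp add: normal_words_0 delta_def)
next
  case (Cons x z)
  let ?n = "length z"
  have x: "x < 5" and z: "set z \<subseteq> {..<5}" using Cons.prems by auto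
  have "T (x # z) = (\<Sum>w\<in>normal_words ?n. scalar (nf z w) * T (x # w))"
    using Cons.IH[OF kills_relation_Cons[OF Cons.prems(1) x] z] .
  also have "\<dots> = (\<Sum>w\<in>normal_words ?n. \<Sum>v\<in>normal_words (Suc ?n). scalar (nf z w * nf_cons x w v) * T v)"
    by (simp add: kills_relation_nf_cons[OF Cons.prems(1) _ x] sum_distrib_left mult.assoc)
  also have "\<dots> = (\<Sum>v\<in>normal_words (Suc ?n). scalar (nf (x # z) v) * T v)"
    by (subst sum.swap) (simp add: nf_cons_comb_def scalar_sum sum_distrib_right)
  finally show ?case by simp
qed

definition koszul_diff :: "(nat list \<Rightarrow> 'k::comm_ring_1 chow) \<Rightarrow> nat list \<Rightarrow> 'k chow" where
  "koszul_diff T z = (\<Sum>x<5. gen x * T (x # z))"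

lemma scal_koszul_diff [simp]: "scal (koszul_diff T z) = 0"
  by (simp add: koszul_diff_def)

lemma coord_koszul_diff: "y < 5 \<Longrightarrow> coord y (koszul_diff T z) = scal (T (y # z))"
  by (drule less_5_cases) (auto simp: koszul_diff_def coord_def gen_def sum_less_5 form_def)

lemma top_koszul_diff: "top (koszul_diff T z) = (\<Sum>x<5. \<Sum>y<5. gram x y * coord y (T (x # z)))"
  by (simp add: koszul_diff_def form_gen)

lemma koszul_diff_cong: "(\<And>x. x < 5 \<Longrightarrow> S (x # z) = T (x # z)) \<Longrightarrow> koszul_diff S z = koszul_diff T z"
  unfolding koszul_diff_def by (rule sum.cong) auto

lemma kills_relation_koszul_diff:
  assumes "kills_relation T"
  shows "kills_relation (koszul_diff T)"
  unfolding kills_relation_def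
proof (intro allI impI)
  fix p q :: "nat list" assume p: "set p \<subseteq> {..<5}" and q: "set q \<subseteq> {..<5}"
  have "(\<Sum>x<5. \<Sum>y<5. scalar (gram x y) * koszul_diff T (p @ x # y # q)) =
      (\<Sum>x<5. \<Sum>y<5. \<Sum>a<5. gen a * (scalar (gram x y) * T ((a # p) @ x # y # q)))"
    unfolding koszul_diff_def by (simp add: sum_distrib_left ac_simps)
  also have "\<dots> = (\<Sum>a<5. gen a * (\<Sum>x<5. \<Sum>y<5. scalar (gram x y) * T ((a # p) @ x # y # q)))"
    by (subst sum.swap, subst (2) sum.swap) (simp add: sum_distrib_left)
  also have "\<dots> = 0"
    using kills_relationD[OF assms _ q, of "_ # p"] p by (intro sum.neutral) simp
  finally show "(\<Sum>x<5. \<Sum>y<5. scalar (gram x y) * koszul_diff T (p @ x # y # q)) = 0" .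
qed

lemma koszul_diff_square:
  assumes "kills_relation T" and "set z \<subseteq> {..<5}"
  shows "koszul_diff (koszul_diff T) z = 0"
proof -
  have "koszul_diff (koszul_diff T) z = (\<Sum>x<5. \<Sum>y<5. (gen x * gen y) * T (y # x # z))"
    unfolding koszul_diff_def by (simp add: sum_distrib_left ac_simps)
  also have "\<dots> = point * (\<Sum>y<5. \<Sum>x<5. scalar (gram y x) * T ([] @ y # x # z))"
    by (subst sum.swap) (simp add: gen_mult_gen gram_sym sum_distrib_left ac_simps)
  also have "\<dots> = 0"
    using kills_relationD[OF assms(1) _ assms(2), of "[]"] by simp
  finally show ?thesis .
qed

text \<open>Exactness: the scalar parts of the preimage reproduce the linear part of \<open>U\<close>, and a correction in
  the \<open>\<xi>\<^sub>2\<close>-direction (where \<open>gram 2 2 = -1\<close>) reproduces its top part; the correction is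
  spread over all words by \<open>nf\<close>, so that it kills the relation.\<close>

definition preimage_scalar :: "nat \<Rightarrow> (nat list \<Rightarrow> 'k::comm_ring_1 chow) \<Rightarrow> nat list \<Rightarrow> 'k" where
  "preimage_scalar n U w = (case w of [] \<Rightarrow> 0 | y # z \<Rightarrow> if length z = Suc n then coord y (U z) else 0)"

definition preimage_top :: "nat \<Rightarrow> (nat list \<Rightarrow> 'k::comm_ring_1 chow) \<Rightarrow> nat list \<Rightarrow> 'k" where
  "preimage_top n U w = (\<Sum>v\<in>normal_words (Suc n). nf w (2 # v) * - top (U v))"

definition koszul_preimage :: "nat \<Rightarrow> (nat list \<Rightarrow> 'k::comm_ring_1 chow) \<Rightarrow> nat list \<Rightarrow> 'k chow" where
  "koszul_preimage n U w = scalar (preimage_scalar n U w) + scalar (preimage_top n U w) * gen 2"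

lemma kills_relation_preimage_scalar:
  assumes U: "kills_relation U" and DU: "\<And>z. z \<in> words n \<Longrightarrow> koszul_diff U z = 0"
  shows "kills_relation (\<lambda>w. scalar (preimage_scalar n U w))"
proof (rule kills_relation_scalar)
  fix p q :: "nat list" assume p: "set p \<subseteq> {..<5}" and q: "set q \<subseteq> {..<5}"
  show "(\<Sum>x<5. \<Sum>y<5. gram x y * preimage_scalar n U (p @ x # y # q)) = 0"
  proof (cases p)
    case Nil
    show ?thesis
    proof (cases "length q = n")
      case True
      then have "(\<Sum>x<5. \<Sum>y<5. gram x y * preimage_scalar n U (p @ x # y # q)) =
          (\<Sum>y<5. \<Sum>x<5. gram y x * coord x (U (y # q)))"
        using Nil by (subst sum.swap) (simp add: preimage_scalar_def gram_sym)
      also have "\<dots> = top (koszul_diff U q)" by (simp add: top_koszul_diff)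
      also have "\<dots> = 0" using DU True q by (simp add: words_def)
      finally show ?thesis .
    qed (simp add: Nil preimage_scalar_def)
  next
    case (Cons a p')
    then have "(\<Sum>x<5. \<Sum>y<5. gram x y * preimage_scalar n U (p @ x # y # q)) =
        (if Suc (length (p' @ q)) = n
         then coord a (\<Sum>x<5. \<Sum>y<5. scalar (gram x y) * U (p' @ x # y # q)) else 0)"
      by (simp add: preimage_scalar_def)
    also have "\<dots> = 0" using kills_relationD[OF U _ q, of p'] Cons p by simp
    finally show ?thesis .
  qed
qed

lemma kills_relation_koszul_preimage:
  assumes "kills_relation U" and "\<And>z. z \<in> words n \<Longrightarrow> koszul_diff U z = 0"
  shows "kills_relation (koszul_preimage n U)"
proof -
  have "kills_relation (\<lambda>w. \<Sum>v\<in>normal_words (Suc n). scalar (nf w (2 # v)) * (scalar (- top (U v)) * gen 2))"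
    by (intro kills_relation_sum finite_normal_words kills_relation_nf)
  then have "kills_relation (\<lambda>w. scalar (preimage_top n U w) * gen 2)"
    by (simp add: preimage_top_def scalar_sum sum_distrib_right mult.assoc)
  then show ?thesis
    unfolding koszul_preimage_def[abs_def]
    by (intro kills_relation_add kills_relation_preimage_scalar assms)
qed

lemma koszul_diff_koszul_preimage:
  assumes U: "kills_relation U" and DU: "\<And>z. z \<in> words n \<Longrightarrow> koszul_diff U z = 0"
    and z: "z \<in> words (Suc n)"
  shows "koszul_diff (koszul_preimage n U) z = U z"
proof (rule chow_coord_eqI)
  obtain y z' where zz: "z = y # z'" and y: "y < 5" and z': "z' \<in> words n"
    using z by (cases z) (auto simp: words_def)
  show "scal (koszul_diff (koszul_preimage n U) z) = scal (U z)"
    using coord_koszul_diff[OF y, of U z'] DU[OF z'] zz by simp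
next
  fix y :: nat assume "y < 5"
  then show "coord y (koszul_diff (koszul_preimage n U) z) = coord y (U z)"
    using z by (simp add: coord_koszul_diff koszul_preimage_def preimage_scalar_def words_def)
next
  have zs: "set z \<subseteq> {..<5}" and lz: "length z = Suc n" using z by (auto simp: words_def)
  have "coord y (koszul_preimage n U w) = (if y = 2 then preimage_top n U w else 0)" if "y < 5" for y w
    using that by (simp add: koszul_preimage_def coord_gen)
  then have "top (koszul_diff (koszul_preimage n U) z) = (\<Sum>x<5. gram x 2 * preimage_top n U (x # z))"
    by (simp add: top_koszul_diff if_distrib[of "\<lambda>c. _ * c"] sum.delta cong: if_cong)
  also have "\<dots> = - preimage_top n U (2 # z)"
    by (simp add: sum_less_5 gram_def)
  also have "\<dots> = (\<Sum>v\<in>normal_words (Suc n). nf z v * top (U v))"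
    by (simp add: preimage_top_def nf_Cons_nonzero[OF _ zs] sum_negf del: nf.simps)
  also have "\<dots> = top (U z)"
    using arg_cong[OF kills_relation_nf_expansion[OF U zs], of top] lz by (simp add: mult.commute)
  finally show "top (koszul_diff (koszul_preimage n U) z) = top (U z)" .
qed

lemma koszul_diff_exact:
  assumes "kills_relation U" and "\<And>z. z \<in> words n \<Longrightarrow> koszul_diff U z = 0"
  shows "\<exists>S. kills_relation S \<and> (\<forall>z\<in>words (Suc n). koszul_diff S z = U z)"
  using kills_relation_koszul_preimage[OF assms] koszul_diff_koszul_preimage[OF assms] by blast

lemma koszul_diff_vanishes:
  assumes "kills_relation U" and "\<And>w. w \<in> normal_words n \<Longrightarrow> koszul_diff U w = 0" and "z \<in> words n"
  shows "koszul_diff U z = 0"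
  using kills_relation_nf_expansion[OF kills_relation_koszul_diff[OF assms(1)], of z] assms(2,3)
  by (simp add: words_def)

lemma koszul_diff_onto_augmentation:
  assumes "scal a = 0"
  shows "\<exists>S. kills_relation S \<and> koszul_diff S [] = (a :: 'k::comm_ring_1 chow)"
proof -
  define S :: "nat list \<Rightarrow> 'k chow" where
    "S z = (if length z = 1 then scalar (coord (hd z) a) + (if hd z = 0 then scalar (top a) * gen 1 else 0)
      else 0)" for z
  have "kills_relation S" by (simp add: kills_relation_def S_def)
  moreover have "koszul_diff S [] = (\<Sum>x<5. scalar (coord x a) * gen x) + scalar (top a) * (gen 0 * gen 1)"
    by (simp add: koszul_diff_def S_def sum_less_5 algebra_simps)
  then have "koszul_diff S [] = a"
    using chow_decomp[of a] assms by (simp add: gen_mult_gen gram_def)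
  ultimately show ?thesis by blast
qed

section \<open>Evaluating polynomials in \<open>chow\<close>\<close>

definition mon_eval :: "(nat set \<Rightarrow> 'k::comm_ring_1 chow) \<Rightarrow> (nat set \<Rightarrow>\<^sub>0 nat) \<Rightarrow> 'k chow" where
  "mon_eval val m = (\<Prod>S\<in>Poly_Mapping.keys m. val S ^ Poly_Mapping.lookup m S)"

definition poly_eval :: "(nat set \<Rightarrow> 'k::comm_ring_1 chow) \<Rightarrow> 'k kpoly \<Rightarrow> 'k chow" where
  "poly_eval val p = (\<Sum>m\<in>Poly_Mapping.keys p. scalar (Poly_Mapping.lookup p m) * mon_eval val m)"

lemma mon_eval_superset:
  "finite K \<Longrightarrow> Poly_Mapping.keys m \<subseteq> K \<Longrightarrow> mon_eval val m = (\<Prod>S\<in>K. val S ^ Poly_Mapping.lookup m S)"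
  unfolding mon_eval_def by (rule prod.mono_neutral_left) (auto simp: in_keys_iff)

lemma poly_eval_superset:
  "finite K \<Longrightarrow> Poly_Mapping.keys p \<subseteq> K \<Longrightarrow>
   poly_eval val p = (\<Sum>m\<in>K. scalar (Poly_Mapping.lookup p m) * mon_eval val m)"
  unfolding poly_eval_def by (rule sum.mono_neutral_left) (auto simp: in_keys_iff)

lemma mon_eval_add: "mon_eval val (m + m') = mon_eval val m * mon_eval val m'"
proof -
  let ?K = "Poly_Mapping.keys m \<union> Poly_Mapping.keys m'"
  have K: "finite ?K" by simp
  have "mon_eval val (m + m') = (\<Prod>S\<in>?K. val S ^ Poly_Mapping.lookup (m + m') S)"
    using keys_add[of m m'] by (intro mon_eval_superset) auto
  also have "\<dots> = mon_eval val m * mon_eval val m'"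
    by (simp add: lookup_add power_add prod.distrib mon_eval_superset[OF K])
  finally show ?thesis .
qed

lemma mon_eval_zero [simp]: "mon_eval val 0 = 1"
  by (simp add: mon_eval_def)

lemma mon_eval_single: "mon_eval val (Poly_Mapping.single S 1) = val S"
  unfolding mon_eval_def by simp

lemma poly_eval_add: "poly_eval val (p + q) = poly_eval val p + poly_eval val q"
proof -
  let ?K = "Poly_Mapping.keys p \<union> Poly_Mapping.keys q"
  have K: "finite ?K" by simp
  have "poly_eval val (p + q) = (\<Sum>m\<in>?K. scalar (Poly_Mapping.lookup (p + q) m) * mon_eval val m)"
    using keys_add[of p q] by (intro poly_eval_superset) auto
  also have "\<dots> = poly_eval val p + poly_eval val q"
    by (simp add: poly_eval_superset[OF K] lookup_add sum.distrib distrib_right)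
  finally show ?thesis .
qed

lemma poly_eval_zero [simp]: "poly_eval val 0 = 0"
  by (simp add: poly_eval_def)

lemma poly_eval_uminus: "poly_eval val (- p) = - poly_eval val p"
proof -
  have "poly_eval val p + poly_eval val (- p) = 0" using poly_eval_add[of val p "- p"] by simp
  then show ?thesis by (metis neg_eq_iff_add_eq_0)
qed

lemma poly_eval_diff: "poly_eval val (p - q) = poly_eval val p - poly_eval val q"
  using poly_eval_add[of val p "- q"] by (simp add: poly_eval_uminus)

lemma poly_eval_sum: "poly_eval val (sum f S) = (\<Sum>i\<in>S. poly_eval val (f i))"
  by (induction S rule: infinite_finite_induct) (simp_all add: poly_eval_add)

lemma poly_eval_single: "poly_eval val (Poly_Mapping.single m c) = scalar c * mon_eval val m"
  by (cases "c = 0") (simp_all add: poly_eval_def)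

lemma poly_mapping_sum_single:
  "p = (\<Sum>m\<in>Poly_Mapping.keys p. Poly_Mapping.single m (Poly_Mapping.lookup p m))"
  by (rule poly_mapping_eqI) (simp add: lookup_sum lookup_single when_def in_keys_iff sum.delta' cong: if_cong)

lemma poly_eval_mult: "poly_eval val (p * q) = poly_eval val p * poly_eval val q"
proof -
  have "p * q = (\<Sum>m\<in>Poly_Mapping.keys p. \<Sum>m'\<in>Poly_Mapping.keys q.
      Poly_Mapping.single m (Poly_Mapping.lookup p m) * Poly_Mapping.single m' (Poly_Mapping.lookup q m'))"
    by (subst poly_mapping_sum_single[of p], subst poly_mapping_sum_single[of q]) (rule sum_product)
  then have "poly_eval val (p * q) = (\<Sum>m\<in>Poly_Mapping.keys p. \<Sum>m'\<in>Poly_Mapping.keys q.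
      scalar (Poly_Mapping.lookup p m) * mon_eval val m *
      (scalar (Poly_Mapping.lookup q m') * mon_eval val m'))"
    by (simp add: poly_eval_sum mult_single poly_eval_single mon_eval_add ac_simps)
  also have "\<dots> = poly_eval val p * poly_eval val q"
    unfolding poly_eval_def by (rule sum_product[symmetric])
  finally show ?thesis .
qed

lemma poly_eval_ideal_gen:
  "x \<in> ideal_gen G \<Longrightarrow> (\<And>g. g \<in> G \<Longrightarrow> poly_eval val g = 0) \<Longrightarrow> poly_eval val x = 0"
  by (induction rule: ideal_gen.induct) (auto simp: poly_eval_add poly_eval_mult)

definition const_poly :: "'k::comm_ring_1 \<Rightarrow> 'k kpoly" where
  "const_poly c = Poly_Mapping.single 0 c"

lemma const_poly_simps:
  "const_poly (a + b) = const_poly a + const_poly b" "const_poly (a * b) = const_poly a * const_poly b"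
  "const_poly 0 = 0" "const_poly 1 = 1" "const_poly (- a) = - const_poly a"
  "const_poly (a - b) = const_poly a - const_poly b"
  by (simp_all add: const_poly_def single_add mult_single single_uminus single_diff)

lemma poly_eval_const_poly [simp]: "poly_eval val (const_poly c) = scalar c"
  by (simp add: const_poly_def poly_eval_single)

lemma poly_eval_var [simp]: "poly_eval val (var S) = val S"
  unfolding var_def poly_eval_single mon_eval_single by simp

lemma scal_mon_eval:
  assumes "\<And>S. scal (val S) = 0"
  shows "scal (mon_eval val m) = (if m = 0 then 1 else (0::'k::comm_ring_1))"
proof (cases "m = 0")
  case False
  then obtain S where S: "S \<in> Poly_Mapping.keys m" by (metis keys_eq_empty all_not_in_conv)
  have scal_prod: "scal (prod f K) = (\<Prod>i\<in>K. scal (f i))" for f :: "nat set \<Rightarrow> 'k chow" and K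
    by (induction K rule: infinite_finite_induct) simp_all
  have scal_power: "scal (x ^ e) = scal x ^ e" for x :: "'k chow" and e
    by (induction e) simp_all
  have "scal (val S) ^ Poly_Mapping.lookup m S = 0"
    using S assms by (simp add: in_keys_iff zero_power)
  then have "scal (mon_eval val m) = 0"
    using S by (auto simp: mon_eval_def scal_prod scal_power intro: prod_zero)
  then show ?thesis using False by simp
qed simp

lemma scal_poly_eval:
  assumes "\<And>S. scal (val S) = 0"
  shows "scal (poly_eval val g) = Poly_Mapping.lookup g (0 :: nat set \<Rightarrow>\<^sub>0 nat)"
  by (simp add: poly_eval_def scal_mon_eval[OF assms] sum.delta' in_keys_iff
      if_distrib[of "\<lambda>v. _ * v"] cong: if_cong)

section \<open>Keel's relations hold in \<open>chow\<close>\<close>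

lemma card_cmpl: "S \<subseteq> {1..n} \<Longrightarrow> card (cmpl n S) = n - card S"
  unfolding cmpl_def by (subst card_Diff_subset) (auto intro: finite_subset)

lemma cmpl_cmpl: "S \<subseteq> {1..n} \<Longrightarrow> cmpl n (cmpl n S) = S"
  unfolding cmpl_def by auto

lemma bdiv_5_iff: "bdiv 5 S \<longleftrightarrow> S \<subseteq> {1..5} \<and> (card S = 2 \<or> card S = 3)"
  using card_cmpl[of S 5] card_mono[of "{1..5::nat}" S] by (auto simp: bdiv_def cmpl_def)

lemma bdiv_cmpl: "bdiv 5 S \<Longrightarrow> bdiv 5 (cmpl 5 S)"
  using card_cmpl[of S 5] by (auto simp: bdiv_5_iff cmpl_def)

definition compatible :: "nat \<Rightarrow> nat set \<Rightarrow> nat set \<Rightarrow> bool" where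
  "compatible n S T \<longleftrightarrow> S \<subseteq> T \<or> T \<subseteq> S \<or> S \<subseteq> cmpl n T \<or> cmpl n T \<subseteq> S"

lemma compatible_cmpl_left:
  "S \<subseteq> {1..n} \<Longrightarrow> T \<subseteq> {1..n} \<Longrightarrow> compatible n (cmpl n S) T \<longleftrightarrow> compatible n S T"
  by (auto simp: compatible_def cmpl_def)

lemma compatible_cmpl_right:
  "S \<subseteq> {1..n} \<Longrightarrow> T \<subseteq> {1..n} \<Longrightarrow> compatible n S (cmpl n T) \<longleftrightarrow> compatible n S T"
  by (auto simp: compatible_def cmpl_def)

definition is_pair :: "nat set \<Rightarrow> bool" where
  "is_pair P \<longleftrightarrow> P \<subseteq> {1..5} \<and> card P = 2"

lemma is_pair_insert: "is_pair {a, b} \<longleftrightarrow> a \<noteq> b \<and> a \<in> {1..5} \<and> b \<in> {1..5}"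
  by (auto simp: is_pair_def card_insert_if)

lemma compatible_pairs:
  assumes "is_pair P" "is_pair Q"
  shows "compatible 5 P Q \<longleftrightarrow> P = Q \<or> P \<inter> Q = {}"
proof -
  have P: "P \<subseteq> {1..5}" "card P = 2" and Q: "Q \<subseteq> {1..5}" "card Q = 2"
    using assms by (simp_all add: is_pair_def)
  have "card (cmpl 5 Q) = 3" using Q card_cmpl[of Q 5] by simp
  then have "\<not> cmpl 5 Q \<subseteq> P" using P card_mono[of P "cmpl 5 Q"] by (auto intro: finite_subset)
  moreover have "P \<subseteq> Q \<longleftrightarrow> P = Q" "Q \<subseteq> P \<longleftrightarrow> P = Q"
    using P Q card_subset_eq[of Q P] card_subset_eq[of P Q] by (auto intro: finite_subset)
  ultimately show ?thesis using P(1) by (auto simp: compatible_def cmpl_def)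
qed

text \<open>Since \<open>D\<^sup>S = D\<^bsup>S\<^sup>C\<^esup>\<close>, every boundary divisor of \<open>M\<^sub>0\<^sub>,\<^sub>5\<close> is \<open>D\<^sup>P\<close> for a unique two-element \<open>P\<close>.\<close>

definition pair_rep :: "nat set \<Rightarrow> nat set" where
  "pair_rep S = (if card S = 2 then S else cmpl 5 S)"

lemma is_pair_pair_rep: "bdiv 5 S \<Longrightarrow> is_pair (pair_rep S)"
  using card_cmpl[of S 5] by (auto simp: bdiv_5_iff pair_rep_def cmpl_def is_pair_def)

lemma pair_rep_cmpl: "bdiv 5 S \<Longrightarrow> pair_rep (cmpl 5 S) = pair_rep S"
  using card_cmpl[of S 5] cmpl_cmpl[of S 5] by (auto simp: bdiv_5_iff pair_rep_def)

lemma incompatible_pair_reps: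
  assumes "bdiv 5 S" "bdiv 5 T" "\<not> compatible 5 S T"
  shows "pair_rep S \<noteq> pair_rep T" "pair_rep S \<inter> pair_rep T \<noteq> {}"
proof -
  have ST: "S \<subseteq> {1..5}" "T \<subseteq> {1..5}" using assms by (simp_all add: bdiv_5_iff)
  have "\<not> compatible 5 (pair_rep S) (pair_rep T)"
    using assms(3) ST compatible_cmpl_left[of S 5] compatible_cmpl_right[of _ 5 T]
      compatible_cmpl_left[of S 5 "cmpl 5 T"]
    by (auto simp: pair_rep_def cmpl_def)
  then show "pair_rep S \<noteq> pair_rep T" "pair_rep S \<inter> pair_rep T \<noteq> {}"
    using compatible_pairs is_pair_pair_rep[OF assms(1)] is_pair_pair_rep[OF assms(2)] by blast+
qed

text \<open>The class of \<open>D\<^bsup>{a,b}\<^esup>\<close> is \<open>marked_class a + marked_class b + offset_class\<close>; Keel's linear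
  relations hold because both sides are the same symmetric expression in \<open>i, j, k, l\<close>.\<close>

definition marked_class :: "nat \<Rightarrow> 'k::comm_ring_1 chow" where
  "marked_class i = (if i = 1 then Chow 0 0 1 (-1) 0 0 0 else if i = 2 then Chow 0 1 0 (-1) 0 0 0
    else if i = 3 then Chow 0 0 0 0 1 0 0 else if i = 4 then Chow 0 0 0 0 0 1 0 else Chow 0 0 0 (-1) 1 1 0)"

definition offset_class :: "'k::comm_ring_1 chow" where
  "offset_class = Chow 0 0 0 1 (-1) (-1) 0"

definition divisor_class :: "nat set \<Rightarrow> 'k::comm_ring_1 chow" where
  "divisor_class S = (if bdiv 5 S then (\<Sum>x\<in>pair_rep S. marked_class x) + offset_class else 0)"

lemma scal_marked_class [simp]: "scal (marked_class i) = 0" "top (marked_class i) = 0"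
  by (simp_all add: marked_class_def)

lemma scal_offset_class [simp]: "scal offset_class = 0" "top offset_class = 0"
  by (simp_all add: offset_class_def)

lemma scal_divisor_class [simp]: "scal (divisor_class S) = 0"
  by (simp add: divisor_class_def)

lemma divisor_class_pair:
  "a \<noteq> b \<Longrightarrow> a \<in> {1..5} \<Longrightarrow> b \<in> {1..5} \<Longrightarrow> divisor_class {a, b} = marked_class a + marked_class b + offset_class"
  by (simp add: divisor_class_def bdiv_5_iff pair_rep_def)

lemma divisor_class_cmpl: "bdiv 5 S \<Longrightarrow> divisor_class (cmpl 5 S) = divisor_class S"
  by (simp add: divisor_class_def bdiv_cmpl pair_rep_cmpl)

lemma divisor_class_pair_rep: "bdiv 5 S \<Longrightarrow> divisor_class (pair_rep S) = divisor_class S"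
  using divisor_class_cmpl[of S] by (auto simp: pair_rep_def)

lemma in_1_5_cases: "(a::nat) \<in> {1..5} \<Longrightarrow> a = 1 \<or> a = 2 \<or> a = 3 \<or> a = 4 \<or> a = 5"
  by (simp add: atLeastAtMost_iff) presburger

lemma form_marked_class:
  "i \<in> {1..5} \<Longrightarrow> j \<in> {1..5} \<Longrightarrow>
   form (marked_class i) (marked_class j) =
     - of_bool (i = j) - of_bool (i = 5) - (of_bool (j = 5) :: 'k::comm_ring_1)"
  by (drule in_1_5_cases)+ (elim disjE; simp add: form_def marked_class_def)

lemma form_marked_offset:
  "i \<in> {1..5} \<Longrightarrow> form (marked_class i) offset_class = 1 + 2 * (of_bool (i = 5) :: 'k::comm_ring_1)"
  "i \<in> {1..5} \<Longrightarrow> form offset_class (marked_class i) = 1 + 2 * (of_bool (i = 5) :: 'k::comm_ring_1)"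
  by (drule in_1_5_cases; elim disjE; simp add: form_def marked_class_def offset_class_def)+

lemma form_offset_offset: "form offset_class offset_class = (-3 :: 'k::comm_ring_1)"
  by (simp add: form_def offset_class_def)

lemma form_pair_classes:
  assumes "{a, b, c, d} \<subseteq> {1..5}"
  shows "form (marked_class a + marked_class b + offset_class) (marked_class c + marked_class d + offset_class) =
    1 - (of_bool (a = c) + of_bool (a = d) + of_bool (b = c) + (of_bool (b = d) :: 'k::comm_ring_1))"
  using assms by (simp add: form_add_left form_add_right form_marked_class form_marked_offset
      form_offset_offset algebra_simps)

lemma form_divisor_classes:
  assumes "is_pair P" "is_pair Q"
  shows "form (divisor_class P) (divisor_class Q) =
    (if P = Q then -1 else if P \<inter> Q = {} then 1 else (0::'k::comm_ring_1))"
proof -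
  obtain a b where P: "P = {a, b}" "a \<noteq> b" using assms(1) unfolding is_pair_def by (metis card_2_iff)
  obtain c d where Q: "Q = {c, d}" "c \<noteq> d" using assms(2) unfolding is_pair_def by (metis card_2_iff)
  have "{a, b, c, d} \<subseteq> {1..5}" using assms P Q by (simp add: is_pair_def)
  then have "form (divisor_class P) (divisor_class Q) =
      1 - (of_bool (a = c) + of_bool (a = d) + of_bool (b = c) + (of_bool (b = d) :: 'k))"
    using P Q by (simp add: divisor_class_pair form_pair_classes)
  then show ?thesis
    using P Q by (cases "a = c"; cases "a = d"; cases "b = c"; cases "b = d") (auto simp: doubleton_eq_iff)
qed

lemma divisor_class_mult_incompatible:
  assumes S: "bdiv 5 S" and T: "bdiv 5 T" and "\<not> compatible 5 S T"
  shows "divisor_class S * divisor_class T = (0::'k::comm_ring_1 chow)"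
proof -
  have "form (divisor_class (pair_rep S)) (divisor_class (pair_rep T)) = (0::'k)"
    using form_divisor_classes[OF is_pair_pair_rep[OF S] is_pair_pair_rep[OF T]]
      incompatible_pair_reps[OF assms] by simp
  then show ?thesis
    by (intro chow_eqI) (simp_all add: divisor_class_pair_rep[OF S] divisor_class_pair_rep[OF T])
qed

lemma keel_sum_5:
  assumes d: "distinct [i, j, k, l]" and s: "{i, j, k, l} \<subseteq> {1..5}"
  shows "keel_sum 5 i j k l = var {i, j} + (var (cmpl 5 {k, l}) :: 'k::comm_ring_1 kpoly)"
proof -
  have c3: "card (cmpl 5 {k, l}) = 3" using d s card_cmpl[of "{k, l}"] by simp
  have "{S. bdiv 5 S \<and> i \<in> S \<and> j \<in> S \<and> k \<notin> S \<and> l \<notin> S} = {{i, j}, cmpl 5 {k, l}}"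
  proof (intro equalityI subsetI)
    fix S assume "S \<in> {S. bdiv 5 S \<and> i \<in> S \<and> j \<in> S \<and> k \<notin> S \<and> l \<notin> S}"
    then have b: "card S = 2 \<or> card S = 3" and ij: "{i, j} \<subseteq> S" and sub: "S \<subseteq> cmpl 5 {k, l}"
      by (auto simp: bdiv_5_iff cmpl_def)
    have "finite S" using sub by (rule finite_subset) (simp add: cmpl_def)
    then show "S \<in> {{i, j}, cmpl 5 {k, l}}"
      using b card_subset_eq[OF _ ij] card_subset_eq[OF _ sub] c3 d by (auto simp: cmpl_def)
  qed (use d s c3 in \<open>auto simp: bdiv_5_iff cmpl_def\<close>)
  moreover have "{i, j} \<noteq> cmpl 5 {k, l}"
  proof
    assume "{i, j} = cmpl 5 {k, l}"
    then have "card {i, j} = 3" using c3 by simp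
    then show False using d by simp
  qed
  ultimately show ?thesis by (simp add: keel_sum_def)
qed

lemma poly_eval_keel_sum:
  assumes "distinct [i, j, k, l]" and "{i, j, k, l} \<subseteq> {1..5}"
  shows "poly_eval divisor_class (keel_sum 5 i j k l :: 'k::comm_ring_1 kpoly) =
    marked_class i + marked_class j + marked_class k + marked_class l + offset_class + offset_class"
  using assms divisor_class_cmpl[of "{k, l}", where 'a='k]
  by (simp add: keel_sum_5 poly_eval_add divisor_class_pair bdiv_5_iff)

lemma poly_eval_keel_rels:
  assumes "g \<in> keel_rels 5"
  shows "poly_eval divisor_class (g :: 'k::comm_ring_1 kpoly) = 0"
proof -
  have dist: "distinct [i, j, k, l]" if "card {i, j, k, l} = 4" for i j k l :: nat
    using that card_distinct[of "[i, j, k, l]"] by simp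
  from assms show ?thesis
    unfolding keel_rels_def
  proof (elim UnE CollectE exE conjE)
    fix S assume "g = var S" "\<not> bdiv 5 S"
    then show ?thesis by (simp add: divisor_class_def)
  next
    fix S assume "g = var S - var (cmpl 5 S)" "bdiv 5 S"
    then show ?thesis by (simp add: poly_eval_diff divisor_class_cmpl)
  next
    fix i j k l assume g: "g = keel_sum 5 i j k l - keel_sum 5 i k j l"
      and "{i, j, k, l} \<subseteq> {1..5}" "card {i, j, k, l} = 4"
    then show ?thesis
      using dist[of i j k l] unfolding g by (simp add: poly_eval_diff poly_eval_keel_sum insert_commute)
  next
    fix i j k l assume g: "g = keel_sum 5 i j k l - keel_sum 5 i l j k"
      and "{i, j, k, l} \<subseteq> {1..5}" "card {i, j, k, l} = 4"
    then show ?thesis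
      using dist[of i j k l] unfolding g by (simp add: poly_eval_diff poly_eval_keel_sum insert_commute)
  next
    fix S T assume "g = var S * var T" "bdiv 5 S" "bdiv 5 T"
      "\<not> (S \<subseteq> T \<or> T \<subseteq> S \<or> S \<subseteq> cmpl 5 T \<or> cmpl 5 T \<subseteq> S)"
    then show ?thesis by (simp add: poly_eval_mult divisor_class_mult_incompatible compatible_def)
  qed
qed

lemma poly_eval_keel_ideal: "x \<in> keel_ideal 5 \<Longrightarrow> poly_eval divisor_class (x :: 'k::comm_ring_1 kpoly) = 0"
  unfolding keel_ideal_def by (erule poly_eval_ideal_gen) (rule poly_eval_keel_rels)

lemma scal_poly_eval_divisor_class: "scal (poly_eval divisor_class g) = Poly_Mapping.lookup g 0"
  by (rule scal_poly_eval) simp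

section \<open>Keel's ideal is the kernel of the evaluation\<close>

text \<open>Every polynomial is congruent modulo Keel's ideal to \<open>chow_lift\<close> of its value. The linear
  relations express the ten variables \<open>var {a, b}\<close> through the five polynomials \<open>lin_basis x\<close>; a
  product of two variables \<open>var {a, b}\<close> is congruent to a multiple of \<open>point_poly\<close>, and products
  with \<open>point_poly\<close> lie in the ideal.\<close>

lemma ideal_gen_mult_right: "x \<in> ideal_gen G \<Longrightarrow> x * r \<in> ideal_gen G"
  using ideal_gen.mult[of x G r] by (simp add: mult.commute)

lemma ideal_gen_diff: "x \<in> ideal_gen G \<Longrightarrow> y \<in> ideal_gen G \<Longrightarrow> x - y \<in> ideal_gen G"
  using ideal_gen.add[OF _ ideal_gen.mult[of y G "- 1"], of x] by simp

lemma ideal_gen_sum: "(\<And>i. i \<in> S \<Longrightarrow> f i \<in> ideal_gen G) \<Longrightarrow> sum f S \<in> ideal_gen G"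
  by (induction S rule: infinite_finite_induct) (auto intro: ideal_gen.intros)

definition keel_cong :: "'k::comm_ring_1 kpoly \<Rightarrow> 'k kpoly \<Rightarrow> bool" where
  "keel_cong p q \<longleftrightarrow> p - q \<in> keel_ideal 5"

lemma keel_cong_refl [simp]: "keel_cong p p"
  by (simp add: keel_cong_def keel_ideal_def ideal_gen.zero)

lemma keel_cong_sym: "keel_cong p q \<Longrightarrow> keel_cong q p"
  using ideal_gen.mult[of "p - q" _ "- 1"] by (simp add: keel_cong_def keel_ideal_def)

lemma keel_cong_trans [trans]: "keel_cong p q \<Longrightarrow> keel_cong q r \<Longrightarrow> keel_cong p r"
  using ideal_gen.add[of "p - q" _ "q - r"] by (simp add: keel_cong_def keel_ideal_def)

lemma keel_cong_add: "keel_cong p q \<Longrightarrow> keel_cong p' q' \<Longrightarrow> keel_cong (p + p') (q + q')"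
  using ideal_gen.add[of "p - q" _ "p' - q'"] by (simp add: keel_cong_def keel_ideal_def algebra_simps)

lemma keel_cong_diff: "keel_cong p q \<Longrightarrow> keel_cong p' q' \<Longrightarrow> keel_cong (p - p') (q - q')"
  using ideal_gen_diff[of "p - q" _ "p' - q'"] by (simp add: keel_cong_def keel_ideal_def algebra_simps)

lemma keel_cong_mult_left: "keel_cong p q \<Longrightarrow> keel_cong (r * p) (r * q)"
  using ideal_gen.mult[of "p - q" _ r] by (simp add: keel_cong_def keel_ideal_def algebra_simps)

lemma keel_cong_mult: "keel_cong p q \<Longrightarrow> keel_cong p' q' \<Longrightarrow> keel_cong (p * p') (q * q')"
  using keel_cong_add[OF keel_cong_mult_left[of p' q' p] keel_cong_mult_left[of p q q']]
  by (simp add: keel_cong_def algebra_simps)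

lemma keel_cong_sum: "(\<And>i. i \<in> S \<Longrightarrow> keel_cong (f i) (g i)) \<Longrightarrow> keel_cong (sum f S) (sum g S)"
  using ideal_gen_sum[of S "\<lambda>i. f i - g i"] by (simp add: keel_cong_def keel_ideal_def sum_subtractf)

lemma keel_cong_zero: "keel_cong p 0 \<longleftrightarrow> p \<in> keel_ideal 5"
  by (simp add: keel_cong_def)

lemma keel_cong_cancel:
  assumes "keel_cong (p + u) (q + v)" "u \<in> keel_ideal 5" "v \<in> keel_ideal 5"
  shows "keel_cong p q"
proof -
  have "(p + u - (q + v)) - u + v \<in> keel_ideal 5"
    using assms unfolding keel_cong_def keel_ideal_def by (rule ideal_gen.add[OF ideal_gen_diff])
  then show ?thesis by (simp add: keel_cong_def algebra_simps)
qed

lemma keel_cong_in_ideal: "keel_cong p q \<Longrightarrow> q \<in> keel_ideal 5 \<Longrightarrow> p \<in> keel_ideal 5"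
  using ideal_gen.add[of "p - q" _ q] by (simp add: keel_cong_def keel_ideal_def)

lemma keel_rels_in_keel_ideal: "g \<in> keel_rels n \<Longrightarrow> g \<in> keel_ideal n"
  by (simp add: keel_ideal_def ideal_gen.base)

lemma var_non_divisor: "\<not> bdiv 5 S \<Longrightarrow> var S \<in> keel_ideal 5"
  by (rule keel_rels_in_keel_ideal, unfold keel_rels_def) (intro UnI1, blast)

lemma var_cong_cmpl: "bdiv 5 S \<Longrightarrow> keel_cong (var S) (var (cmpl 5 S))"
  unfolding keel_cong_def
  by (rule keel_rels_in_keel_ideal, unfold keel_rels_def) (intro UnI1 UnI2, blast)

lemma keel_linear_relation:
  "{i, j, k, l} \<subseteq> {1..5} \<Longrightarrow> card {i, j, k, l} = 4 \<Longrightarrow>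
   keel_cong (keel_sum 5 i j k l) (keel_sum 5 i k j l)"
  unfolding keel_cong_def
  by (rule keel_rels_in_keel_ideal, unfold keel_rels_def) (rule UnI1, rule UnI1, rule UnI2, blast)

lemma keel_quadratic_relation:
  "bdiv 5 S \<Longrightarrow> bdiv 5 T \<Longrightarrow> \<not> compatible 5 S T \<Longrightarrow> var S * var T \<in> keel_ideal 5"
  by (rule keel_rels_in_keel_ideal, unfold keel_rels_def compatible_def) (rule UnI2, blast)

lemma var_cong_pair_rep: "bdiv 5 S \<Longrightarrow> keel_cong (var S) (var (pair_rep S))"
  by (simp add: pair_rep_def var_cong_cmpl)

lemma pair_containing:
  assumes "card P = 2" "a \<in> P"
  obtains b where "P = {a, b}" "a \<noteq> b"
proof -
  obtain x y where "P = {x, y}" "x \<noteq> y" using assms(1) by (metis card_2_iff)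
  then show thesis using assms(2) that[of y] that[of x] by (auto simp: insert_commute)
qed

lemma pair_enumeration:
  assumes "is_pair P"
  obtains a b c d e where "P = {a, b}" "{1..5} = {a, b, c, d, e}" "distinct [a, b, c, d, e]"
proof -
  have P: "P \<subseteq> {1..5}" "card P = 2" using assms by (simp_all add: is_pair_def)
  obtain a b where ab: "P = {a, b}" "a \<noteq> b" using P(2) by (metis card_2_iff)
  have "card ({1..5} - P) = 3" using P card_Diff_subset[of P "{1..5}"] finite_subset[of P "{1..5::nat}"]
    by simp
  then obtain c d e where cde: "{1..5} - P = {c, d, e}" "c \<noteq> d" "d \<noteq> e" "c \<noteq> e"
    by (metis card_3_iff)
  have "c \<notin> P" "d \<notin> P" "e \<notin> P" using cde(1) by blast+
  then have "distinct [a, b, c, d, e]" using ab cde(2-4) by auto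
  have "{1..5} = P \<union> ({1..5} - P)" using P(1) by blast
  also have "\<dots> = {a, b, c, d, e}" unfolding cde(1) unfolding ab(1) by (simp add: insert_commute)
  finally show thesis using that[OF ab(1)] \<open>distinct [a, b, c, d, e]\<close> by blast
qed

lemma pairs_of_triple:
  assumes "Q \<subseteq> {c, d, e}" "card Q = 2"
  shows "Q = {c, d} \<or> Q = {c, e} \<or> Q = {d, e}"
proof -
  obtain x y where Q: "Q = {x, y}" "x \<noteq> y" using assms(2) by (auto simp: card_2_iff)
  then have "x \<in> {c, d, e}" "y \<in> {c, d, e}" using assms(1) by auto
  then show ?thesis using Q by (auto simp: insert_commute)
qed

lemma meeting_pair_vars:
  assumes "distinct [a, b, c]" "{a, b, c} \<subseteq> {1..5}"
  shows "var {a, b} * var {a, c} \<in> keel_ideal 5"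
proof (rule keel_quadratic_relation)
  show "\<not> compatible 5 {a, b} {a, c}"
    using assms by (subst compatible_pairs) (auto simp: is_pair_insert doubleton_eq_iff)
qed (use assms in \<open>auto simp: bdiv_5_iff\<close>)

lemma pair_vars_linear_relation:
  assumes d: "distinct [i, j, k, l]" and s: "{i, j, k, l} \<subseteq> {1..5}"
  shows "keel_cong (var {i, j} + var {k, l}) (var {i, k} + (var {j, l} :: 'k::comm_ring_1 kpoly))"
proof -
  have c: "keel_cong (var {a, b}) (var (cmpl 5 {a, b}))" if "a \<noteq> b" "a \<in> {1..5}" "b \<in> {1..5}" for a b
    using that by (intro var_cong_cmpl) (simp add: bdiv_5_iff)
  have "keel_cong (var {i, j} + var {k, l}) (var {i, j} + var (cmpl 5 {k, l}) :: 'k kpoly)"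
    using keel_cong_add[OF keel_cong_refl c[of k l]] d s by simp
  also have "keel_cong \<dots> (var {i, k} + var (cmpl 5 {j, l}))"
  proof -
    have "card {i, j, k, l} = 4" using d by simp
    then have rel: "keel_cong (keel_sum 5 i j k l) (keel_sum 5 i k j l :: 'k kpoly)"
      using s by (rule keel_linear_relation[rotated])
    have d': "distinct [i, k, j, l]" and s': "{i, k, j, l} \<subseteq> {1..5}" using d s by auto
    from rel show ?thesis unfolding keel_sum_5[OF d s] keel_sum_5[OF d' s'] .
  qed
  also have "keel_cong \<dots> (var {i, k} + var {j, l})"
    using keel_cong_add[OF keel_cong_refl keel_cong_sym[OF c[of j l]]] d s by simp
  finally show ?thesis .
qed

lemma disjoint_pair_products_step:
  assumes "distinct [a, b, c, d, e]" "{a, b, c, d, e} \<subseteq> {1..5}"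
  shows "keel_cong (var {a, b} * var {c, d}) (var {a, b} * var {c, e} :: 'k::comm_ring_1 kpoly)"
proof -
  have "keel_cong (var {c, d} + var {e, a}) (var {c, e} + var {d, a} :: 'k kpoly)"
    using assms by (intro pair_vars_linear_relation) auto
  then have "keel_cong (var {a, b} * (var {c, d} + var {a, e}))
      (var {a, b} * (var {c, e} + var {a, d}) :: 'k kpoly)"
    unfolding insert_commute[of e a] insert_commute[of d a] by (rule keel_cong_mult_left)
  then have "keel_cong (var {a, b} * var {c, d} + var {a, b} * var {a, e})
      (var {a, b} * var {c, e} + var {a, b} * var {a, d} :: 'k kpoly)"
    by (simp only: distrib_left)
  moreover have "var {a, b} * var {a, e} \<in> keel_ideal 5" "var {a, b} * var {a, d} \<in> keel_ideal 5"
    using assms by (auto intro!: meeting_pair_vars)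
  ultimately show ?thesis by (rule keel_cong_cancel)
qed

lemma disjoint_products_same_left:
  assumes "is_pair P" "is_pair Q" "is_pair Q'" "P \<inter> Q = {}" "P \<inter> Q' = {}"
  shows "keel_cong (var P * var Q) (var P * var Q' :: 'k::comm_ring_1 kpoly)"
proof -
  obtain a b c d e where P: "P = {a, b}" and five: "{1..5} = {a, b, c, d, e}"
    and dist: "distinct [a, b, c, d, e]"
    using pair_enumeration[OF assms(1)] .
  have sub: "{a, b, c, d, e} \<subseteq> {1..5}" using five by simp
  have to_cd: "keel_cong (var P * var R) (var P * var {c, d} :: 'k kpoly)" if "is_pair R" "P \<inter> R = {}" for R
  proof -
    have "R \<subseteq> {a, b, c, d, e}" using that(1) unfolding five[symmetric] is_pair_def by blast
    then have "R \<subseteq> {c, d, e}" using that(2) unfolding P by blast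
    moreover have "card R = 2" using that(1) by (simp add: is_pair_def)
    ultimately have "R = {c, d} \<or> R = {c, e} \<or> R = {d, e}" by (rule pairs_of_triple)
    then consider "R = {c, d}" | "R = {c, e}" | "R = {d, e}" by blast
    then show ?thesis
    proof cases
      case 2
      have "distinct [a, b, c, e, d]" "{a, b, c, e, d} \<subseteq> {1..5}" using dist sub by auto
      from disjoint_pair_products_step[OF this] show ?thesis unfolding P 2 .
    next
      case 3
      have "distinct [a, b, d, e, c]" "{a, b, d, e, c} \<subseteq> {1..5}" using dist sub by auto
      from disjoint_pair_products_step[OF this] show ?thesis unfolding P 3 insert_commute[of d c] .
    qed simp
  qed
  show ?thesis
    using keel_cong_trans[OF to_cd[OF assms(2,4)] keel_cong_sym[OF to_cd[OF assms(3,5)]]] .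
qed

lemma common_disjoint_pair:
  assumes "is_pair P" "is_pair R" "P \<inter> R \<noteq> {}"
  obtains W where "is_pair W" "P \<inter> W = {}" "R \<inter> W = {}"
proof -
  have fin: "finite P" "finite R" using assms(1,2) by (auto simp: is_pair_def intro: finite_subset)
  have "1 \<le> card (P \<inter> R)" using assms(3) fin by (simp add: Suc_le_eq card_gt_0_iff)
  then have "card (P \<union> R) \<le> 3" using card_Un_Int[OF fin] assms(1,2) by (simp add: is_pair_def)
  moreover have "P \<union> R \<subseteq> {1..5}" using assms(1,2) by (simp add: is_pair_def)
  ultimately have "2 \<le> card ({1..5} - (P \<union> R))" using card_Diff_subset[of "P \<union> R" "{1..5::nat}"] fin by simp
  then obtain W where "W \<subseteq> {1..5} - (P \<union> R)" "card W = 2" by (rule obtain_subset_with_card_n)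
  then have "is_pair W" "P \<inter> W = {}" "R \<inter> W = {}" by (auto simp: is_pair_def)
  then show thesis by (rule that)
qed

text \<open>Disjointness makes the two-element subsets of \<open>{1..5}\<close> the Petersen graph, which has diameter
  two; stepping along it with \<open>disjoint_products_same_left\<close> connects any two products of
  disjoint pairs.\<close>

lemma disjoint_products_cong:
  assumes P: "is_pair P" and Q: "is_pair Q" and R: "is_pair R" and T: "is_pair T"
    and PQ: "P \<inter> Q = {}" and RT: "R \<inter> T = {}"
  shows "keel_cong (var P * var Q) (var R * var T :: 'k::comm_ring_1 kpoly)"
proof (cases "P \<inter> R = {}")
  case True
  have "keel_cong (var P * var Q) (var P * var R :: 'k kpoly)"
    using P Q R PQ True by (rule disjoint_products_same_left)
  also have "var P * var R = var R * var P" by (rule mult.commute)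
  also have "keel_cong \<dots> (var R * var T)"
    using R P T True RT by (intro disjoint_products_same_left) auto
  finally show ?thesis .
next
  case False
  then obtain W where W: "is_pair W" "P \<inter> W = {}" "R \<inter> W = {}"
    using common_disjoint_pair P R by blast
  have "keel_cong (var P * var Q) (var P * var W :: 'k kpoly)"
    using P Q W PQ by (intro disjoint_products_same_left)
  also have "var P * var W = var W * var P" by (rule mult.commute)
  also have "keel_cong \<dots> (var W * var R)"
    using W P R by (intro disjoint_products_same_left) auto
  also have "var W * var R = var R * var W" by (rule mult.commute)
  also have "keel_cong \<dots> (var R * var T)"
    using R W T RT by (intro disjoint_products_same_left) auto
  finally show ?thesis .
qed

definition point_poly :: "'k::comm_ring_1 kpoly" where
  "point_poly = var {3, 4} * var {1, 5}"

lemma disjoint_product_cong_point: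
  "is_pair P \<Longrightarrow> is_pair Q \<Longrightarrow> P \<inter> Q = {} \<Longrightarrow> keel_cong (var P * var Q) point_poly"
  unfolding point_poly_def by (rule disjoint_products_cong) (auto simp: is_pair_insert)

lemma meeting_pairs_product:
  assumes "is_pair P" "is_pair Q" "P \<noteq> Q" "P \<inter> Q \<noteq> {}"
  shows "var P * var Q \<in> keel_ideal 5"
proof -
  obtain a where a: "a \<in> P" "a \<in> Q" using assms(4) by blast
  have "card P = 2" "card Q = 2" using assms(1,2) by (simp_all add: is_pair_def)
  obtain b where P: "P = {a, b}" "a \<noteq> b" using pair_containing[OF \<open>card P = 2\<close> a(1)] .
  obtain c where Q: "Q = {a, c}" "a \<noteq> c" using pair_containing[OF \<open>card Q = 2\<close> a(2)] .
  have "distinct [a, b, c]" "{a, b, c} \<subseteq> {1..5}" using assms(1-3) P Q by (auto simp: is_pair_def)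
  then show ?thesis unfolding P Q by (rule meeting_pair_vars)
qed

lemma pair_square_cong:
  assumes "is_pair P"
  shows "keel_cong (var P * var P) (- point_poly :: 'k::comm_ring_1 kpoly)"
proof -
  obtain a b c d e where P: "P = {a, b}" and five: "{1..5} = {a, b, c, d, e}"
    and dist: "distinct [a, b, c, d, e]"
    using pair_enumeration[OF assms] .
  have sub: "{a, b, c, d} \<subseteq> {1..5}" using five by auto
  have "keel_cong (var {a, b} * (var {a, b} + var {c, d})) (var {a, b} * (var {a, c} + var {b, d}) :: 'k kpoly)"
    using dist sub by (intro keel_cong_mult_left pair_vars_linear_relation) auto
  then have "keel_cong (var {a, b} * var {a, b} + var {a, b} * var {c, d})
      (var {a, b} * var {a, c} + var {b, a} * var {b, d} :: 'k kpoly)"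
    by (simp only: distrib_left insert_commute[of a b])
  moreover have "var {a, b} * var {a, c} + var {b, a} * var {b, d} \<in> keel_ideal 5"
    using dist sub unfolding keel_ideal_def
    by (intro ideal_gen.add meeting_pair_vars[unfolded keel_ideal_def]) auto
  ultimately have "keel_cong (var {a, b} * var {a, b} + var {a, b} * var {c, d}) (0 :: 'k kpoly)"
    unfolding keel_cong_zero by (rule keel_cong_in_ideal)
  moreover have "keel_cong (var {a, b} * var {c, d}) (point_poly :: 'k kpoly)"
    using dist sub by (intro disjoint_product_cong_point) (auto simp: is_pair_insert)
  ultimately show ?thesis
    unfolding P using keel_cong_diff by fastforce
qed

lemma pair_mult_point:
  assumes "is_pair P"
  shows "var P * point_poly \<in> keel_ideal 5"
proof -
  obtain a b c d e where P: "P = {a, b}" and five: "{1..5} = {a, b, c, d, e}"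
    and dist: "distinct [a, b, c, d, e]"
    using pair_enumeration[OF assms] .
  have sub: "{a, b, c, d, e} \<subseteq> {1..5}" using five by simp
  have "keel_cong (var {a, c} * var {d, e}) point_poly"
    using dist sub by (intro disjoint_product_cong_point) (auto simp: is_pair_insert)
  then have "keel_cong point_poly (var {a, c} * var {d, e})" by (rule keel_cong_sym)
  then have "keel_cong (var P * point_poly) ((var {a, b} * var {a, c}) * var {d, e})"
    unfolding P mult.assoc by (rule keel_cong_mult_left)
  moreover have "(var {a, b} * var {a, c}) * var {d, e} \<in> keel_ideal 5"
    using dist sub unfolding keel_ideal_def
    by (intro ideal_gen_mult_right meeting_pair_vars[unfolded keel_ideal_def]) auto
  ultimately show ?thesis by (rule keel_cong_in_ideal)
qed

lemma point_mult_point: "point_poly * point_poly \<in> keel_ideal 5"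
proof -
  have "var {1, 5} * (var {3, 4} * point_poly) \<in> keel_ideal 5"
    using pair_mult_point[of "{3, 4}"] unfolding keel_ideal_def
    by (rule ideal_gen.mult) (simp add: is_pair_insert)
  then show ?thesis by (simp add: point_poly_def ac_simps)
qed

lemma pair_product_cong:
  assumes "is_pair P" "is_pair Q"
  shows "keel_cong (var P * var Q) (const_poly (form (divisor_class P) (divisor_class Q)) * point_poly)"
proof -
  consider "P = Q" | "P \<inter> Q = {}" | "P \<noteq> Q" "P \<inter> Q \<noteq> {}" by blast
  then show ?thesis
  proof cases
    case 1
    then show ?thesis
      using pair_square_cong[OF assms(1)] assms by (simp add: form_divisor_classes const_poly_simps)
  next
    case 2
    then have "P \<noteq> Q" using assms by (auto simp: is_pair_def)
    then show ?thesis using disjoint_product_cong_point[OF assms 2] assms 2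
      by (simp add: form_divisor_classes const_poly_simps)
  next
    case 3
    then show ?thesis using meeting_pairs_product[OF assms 3] assms
      by (simp add: form_divisor_classes const_poly_simps keel_cong_zero)
  qed
qed

inductive_set pair_span :: "'k::comm_ring_1 kpoly set" where
  var: "is_pair P \<Longrightarrow> var P \<in> pair_span"
| zero: "0 \<in> pair_span"
| add: "p \<in> pair_span \<Longrightarrow> q \<in> pair_span \<Longrightarrow> p + q \<in> pair_span"
| smult: "p \<in> pair_span \<Longrightarrow> const_poly c * p \<in> pair_span"

lemma pair_span_sum: "(\<And>i. i \<in> S \<Longrightarrow> f i \<in> pair_span) \<Longrightarrow> sum f S \<in> pair_span"
  by (induction S rule: infinite_finite_induct) (auto intro: pair_span.intros)

lemma pair_span_mult_cong:
  assumes "p \<in> pair_span" "q \<in> pair_span"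
  shows "keel_cong (p * q)
    (const_poly (form (poly_eval divisor_class p) (poly_eval divisor_class q)) * point_poly)"
proof -
  have var_left: "keel_cong (var P * q)
      (const_poly (form (divisor_class P) (poly_eval divisor_class q)) * point_poly)"
    if "is_pair P" for P
    using assms(2)
  proof (induction q)
    case (var Q)
    then show ?case using pair_product_cong[OF that var] by simp
  next
    case (add q q')
    then show ?case
      using keel_cong_add[OF add.IH]
      by (simp add: distrib_left distrib_right poly_eval_add form_add_right const_poly_simps)
  next
    case (smult q c)
    then show ?case
      using keel_cong_mult_left[OF smult.IH, of "const_poly c"]
      by (simp add: poly_eval_mult form_scalar_mult const_poly_simps ac_simps)
  qed (simp add: form_zero const_poly_simps)
  from assms(1) show ?thesis
  proof (induction p)
    case (var P)
    then show ?case using var_left by simp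
  next
    case (add p p')
    then show ?case
      using keel_cong_add[OF add.IH] by (simp add: distrib_right poly_eval_add form_add_left const_poly_simps)
  next
    case (smult p c)
    then show ?case
      using keel_cong_mult_left[OF smult.IH, of "const_poly c"]
      by (simp add: poly_eval_mult form_scalar_mult const_poly_simps ac_simps)
  qed (simp add: form_zero const_poly_simps)
qed

lemma pair_span_mult_point: "p \<in> pair_span \<Longrightarrow> p * point_poly \<in> keel_ideal 5"
  unfolding keel_ideal_def
proof (induction rule: pair_span.induct)
  case (var P)
  then show ?case using pair_mult_point[OF var] by (simp add: keel_ideal_def)
next
  case (add p q)
  then show ?case by (simp add: distrib_right ideal_gen.add)
next
  case (smult p c)
  then show ?case by (simp add: mult.assoc ideal_gen.mult)
qed (simp add: ideal_gen.zero)

definition lin_basis :: "nat \<Rightarrow> 'k::comm_ring_1 kpoly" where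
  "lin_basis x = (if x = 0 then var {3, 4} + var {2, 5} else if x = 1 then var {3, 4} + var {1, 5}
     else if x = 2 then var {3, 4} else if x = 3 then var {3, 5} else var {4, 5})"

lemma lin_basis_in_pair_span: "lin_basis x \<in> pair_span"
  by (simp add: lin_basis_def is_pair_insert pair_span.var pair_span.add)

lemma poly_eval_lin_basis: "x < 5 \<Longrightarrow> poly_eval divisor_class (lin_basis x) = (gen x :: 'k::comm_ring_1 chow)"
  by (drule less_5_cases)
    (elim disjE; rule chow_eqI; simp add: lin_basis_def poly_eval_add divisor_class_pair marked_class_def
      offset_class_def gen_def form_def)

lemma poly_eval_point_poly: "poly_eval divisor_class point_poly = (point :: 'k::comm_ring_1 chow)"
  by (rule chow_eqI)
    (simp_all add: point_poly_def poly_eval_mult divisor_class_pair marked_class_def offset_class_def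
      point_def form_def)

definition lift_lin :: "'k::comm_ring_1 chow \<Rightarrow> 'k kpoly" where
  "lift_lin a = (\<Sum>x<5. const_poly (coord x a) * lin_basis x)"

definition chow_lift :: "'k::comm_ring_1 chow \<Rightarrow> 'k kpoly" where
  "chow_lift a = const_poly (scal a) + lift_lin a + const_poly (top a) * point_poly"

lemma lift_lin_in_pair_span: "lift_lin a \<in> pair_span"
  unfolding lift_lin_def by (intro pair_span_sum pair_span.smult lin_basis_in_pair_span)

lemma poly_eval_lift_lin: "poly_eval divisor_class (lift_lin a) = (\<Sum>x<5. scalar (coord x a) * gen x)"
  by (simp add: lift_lin_def poly_eval_sum poly_eval_mult poly_eval_lin_basis)

lemma form_poly_eval_lift_lin:
  "form (poly_eval divisor_class (lift_lin a)) (poly_eval divisor_class (lift_lin b)) = form a b"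
proof -
  have "coord y (\<Sum>x<5. scalar (coord x a) * gen x) = coord y a" if "y < 5" for y and a :: "'a chow"
    using that by (simp add: coord_gen if_distrib[of "\<lambda>t. _ * t"] cong: if_cong)
  then show ?thesis
    by (simp add: poly_eval_lift_lin form_expand)
qed

lemma poly_eval_chow_lift: "poly_eval divisor_class (chow_lift a) = a"
  using chow_decomp[of a, symmetric]
  by (simp add: chow_lift_def poly_eval_add poly_eval_mult poly_eval_lift_lin poly_eval_point_poly)

lemma lift_lin_simps:
  "lift_lin (a + b) = lift_lin a + lift_lin b" "lift_lin (scalar c * a) = const_poly c * lift_lin a"
  "lift_lin 0 = 0" "lift_lin 1 = 0" "lift_lin (scalar c) = 0"
  "lift_lin (a * b) = const_poly (scal a) * lift_lin b + const_poly (scal b) * lift_lin a"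
  by (simp_all add: lift_lin_def const_poly_simps coord_mult distrib_right sum.distrib
      sum_distrib_left algebra_simps)

lemma chow_lift_simps:
  "chow_lift (a + b) = chow_lift a + chow_lift b" "chow_lift (scalar c * a) = const_poly c * chow_lift a"
  "chow_lift 0 = 0" "chow_lift 1 = 1"
  by (simp_all add: chow_lift_def lift_lin_simps const_poly_simps algebra_simps)

lemma chow_lift_diff: "chow_lift (a - b) = chow_lift a - chow_lift b"
  using chow_lift_simps(1)[of "a - b" b] by simp

lemma chow_lift_sum: "chow_lift (sum f S) = (\<Sum>i\<in>S. chow_lift (f i))"
  by (induction S rule: infinite_finite_induct) (simp_all add: chow_lift_simps)

lemma chow_lift_mult_cong:
  fixes a b :: "'k::comm_ring_1 chow"
  shows "keel_cong (chow_lift a * chow_lift b) (chow_lift (a * b))"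
proof -
  let ?L = lift_lin and ?P = "point_poly :: 'k kpoly"
  have "chow_lift a * chow_lift b - chow_lift (a * b) =
      (?L a * ?L b - const_poly (form a b) * ?P) + const_poly (top b) * (?L a * ?P)
      + const_poly (top a) * (?L b * ?P) + const_poly (top a * top b) * (?P * ?P)"
    by (simp add: chow_lift_def lift_lin_simps const_poly_simps algebra_simps)
  moreover have "?L a * ?L b - const_poly (form a b) * ?P \<in> keel_ideal 5"
    using pair_span_mult_cong[OF lift_lin_in_pair_span lift_lin_in_pair_span, of a b]
    by (simp add: form_poly_eval_lift_lin keel_cong_def)
  moreover have "?L a * ?P \<in> keel_ideal 5" "?L b * ?P \<in> keel_ideal 5"
    by (intro pair_span_mult_point lift_lin_in_pair_span)+
  ultimately show ?thesis
    using point_mult_point unfolding keel_cong_def keel_ideal_def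
    by (metis ideal_gen.add ideal_gen.mult)
qed

lemma chow_lift_divisor_class_basis:
  "chow_lift (divisor_class {3, 4}) = (var {3, 4} :: 'k::comm_ring_1 kpoly)"
  "x \<in> {1..4} \<Longrightarrow> chow_lift (divisor_class {x, 5}) = (var {x, 5} :: 'k::comm_ring_1 kpoly)"
proof -
  show "chow_lift (divisor_class {3, 4}) = (var {3, 4} :: 'k kpoly)"
    by (simp add: chow_lift_def lift_lin_def sum_less_5 coord_def lin_basis_def divisor_class_pair
        marked_class_def offset_class_def const_poly_simps)
  show "chow_lift (divisor_class {x, 5}) = (var {x, 5} :: 'k kpoly)" if "x \<in> {1..4}"
    using that by (auto simp: atLeastAtMost_iff le_Suc_eq numeral_eq_Suc chow_lift_def lift_lin_def
        sum_less_5 coord_def lin_basis_def divisor_class_pair marked_class_def offset_class_def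
        const_poly_simps)
qed

lemma pair_var_cong_step:
  fixes a b c :: nat
  assumes "distinct [a, b, c]" "{a, b, c} \<subseteq> {1..4}"
    and "keel_cong (var {b, c}) (chow_lift (divisor_class {b, c}) :: 'k::comm_ring_1 kpoly)"
  shows "keel_cong (var {a, b}) (chow_lift (divisor_class {a, b}) :: 'k kpoly)"
proof -
  have five: "var {x, 5} = (chow_lift (divisor_class {x, 5}) :: 'k kpoly)" if "x \<in> {a, b, c}" for x
    using that assms(2) chow_lift_divisor_class_basis(2)[of x, where 'k='k] by auto
  have "keel_cong (var {a, b} + var {5, c}) (var {a, 5} + var {b, c} :: 'k kpoly)"
    using assms(1,2) by (intro pair_vars_linear_relation) auto
  from keel_cong_diff[OF this keel_cong_refl[of "var {5, c}"]]
  have "keel_cong (var {a, b}) (var {a, 5} + var {b, c} - var {c, 5} :: 'k kpoly)"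
    by (simp add: insert_commute[of 5 c])
  also have "keel_cong \<dots> (chow_lift (divisor_class {a, 5}) + chow_lift (divisor_class {b, c})
      - chow_lift (divisor_class {c, 5}))"
    using keel_cong_diff[OF keel_cong_add[OF keel_cong_refl assms(3)] keel_cong_refl] five[of a] five[of c]
    by simp
  also have "\<dots> = chow_lift (divisor_class {a, b})"
    using assms(1,2) by (simp add: divisor_class_pair add_ac flip: chow_lift_diff chow_lift_simps(1))
  finally show ?thesis .
qed

lemma pair_var_cong_lift:
  assumes "is_pair P"
  shows "keel_cong (var P) (chow_lift (divisor_class P) :: 'k::comm_ring_1 kpoly)"
proof -
  let ?C = "\<lambda>P. keel_cong (var P) (chow_lift (divisor_class P) :: 'k kpoly)"
  have 34: "?C {3, 4}" by (simp add: chow_lift_divisor_class_basis)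
  have 13: "?C {1, 3}" using pair_var_cong_step[of 1 3 4] 34 by simp
  have 14: "?C {1, 4}" using pair_var_cong_step[of 1 4 3] 34 by (simp add: insert_commute)
  have 23: "?C {2, 3}" using pair_var_cong_step[of 2 3 4] 34 by simp
  have 24: "?C {2, 4}" using pair_var_cong_step[of 2 4 3] 34 by (simp add: insert_commute)
  have 12: "?C {1, 2}" using pair_var_cong_step[of 1 2 3] 23 by simp
  have ordered: "?C {a, b}" if "a < b" "a \<in> {1..5}" "b \<in> {1..5}" for a b
  proof (cases "b = 5")
    case True
    then show ?thesis using that chow_lift_divisor_class_basis(2)[of a, where 'k='k] by simp
  next
    case False
    then have "(a, b) \<in> {(1, 2), (1, 3), (1, 4), (2, 3), (2, 4), (3, 4)}"
      using that by (simp add: atLeastAtMost_iff) presburger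
    then show ?thesis using 12 13 14 23 24 34 by auto
  qed
  obtain a b where P: "P = {a, b}" "a \<noteq> b" "a \<in> {1..5}" "b \<in> {1..5}"
    using assms unfolding is_pair_def by (metis card_2_iff insert_subset)
  show ?thesis
  proof (cases "a < b")
    case True
    then show ?thesis using ordered P by simp
  next
    case False
    then show ?thesis using ordered[of b a] P by (simp add: insert_commute)
  qed
qed

lemma var_cong_lift: "keel_cong (var S) (chow_lift (divisor_class S) :: 'k::comm_ring_1 kpoly)"
proof (cases "bdiv 5 S")
  case True
  then show ?thesis
    using keel_cong_trans[OF var_cong_pair_rep pair_var_cong_lift[OF is_pair_pair_rep]]
    by (simp add: divisor_class_pair_rep)
next
  case False
  then show ?thesis by (simp add: divisor_class_def chow_lift_simps keel_cong_zero var_non_divisor)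
qed

lemma keel_cong_lift_prod:
  fixes f :: "'a \<Rightarrow> 'k::comm_ring_1 kpoly"
  assumes "finite K" "\<And>S. S \<in> K \<Longrightarrow> keel_cong (f S) (chow_lift (g S))"
  shows "keel_cong (prod f K) (chow_lift (prod g K))"
  using assms
proof (induction K rule: finite_induct)
  case (insert S K)
  then have "keel_cong (f S * prod f K) (chow_lift (g S) * chow_lift (prod g K))"
    by (intro keel_cong_mult) auto
  also have "keel_cong \<dots> (chow_lift (g S * prod g K))" by (rule chow_lift_mult_cong)
  finally show ?case using insert by simp
qed (simp add: chow_lift_simps)

lemma keel_cong_lift_power:
  "keel_cong x (chow_lift a) \<Longrightarrow> keel_cong (x ^ e) (chow_lift (a ^ e) :: 'k::comm_ring_1 kpoly)"
proof (induction e)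
  case (Suc e)
  then have "keel_cong (x * x ^ e) (chow_lift a * chow_lift (a ^ e))" by (intro keel_cong_mult)
  also have "keel_cong \<dots> (chow_lift (a * a ^ e))" by (rule chow_lift_mult_cong)
  finally show ?case by simp
qed (simp add: chow_lift_simps)

lemma single_monomial_prod:
  "Poly_Mapping.single m (1::'k::comm_ring_1) = (\<Prod>S\<in>Poly_Mapping.keys m. var S ^ Poly_Mapping.lookup m S)"
proof -
  have single_sum: "Poly_Mapping.single (sum f K) (1::'k) = (\<Prod>S\<in>K. Poly_Mapping.single (f S) 1)"
    if "finite K" for f :: "nat set \<Rightarrow> (nat set \<Rightarrow>\<^sub>0 nat)" and K
    using that
  proof (induction K rule: finite_induct)
    case (insert S K)
    have "Poly_Mapping.single (f S + sum f K) (1::'k) =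
        Poly_Mapping.single (f S) 1 * Poly_Mapping.single (sum f K) 1"
      by (simp add: mult_single)
    then show ?case using insert by simp
  qed simp
  have single_power: "Poly_Mapping.single (Poly_Mapping.single S e) (1::'k) = var S ^ e" for S e
  proof (induction e)
    case (Suc e)
    have "var S ^ Suc e =
        Poly_Mapping.single (Poly_Mapping.single S 1) 1 * Poly_Mapping.single (Poly_Mapping.single S e) (1::'k)"
      using Suc by (simp add: var_def)
    also have "\<dots> = Poly_Mapping.single (Poly_Mapping.single S (Suc e)) 1"
      by (simp add: mult_single flip: single_add)
    finally show ?case ..
  qed simp
  show ?thesis
    by (subst poly_mapping_sum_single[of m]) (simp add: single_sum single_power)
qed

lemma poly_cong_lift: "keel_cong p (chow_lift (poly_eval divisor_class p) :: 'k::comm_ring_1 kpoly)"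
proof -
  have mon: "keel_cong (Poly_Mapping.single m (1::'k)) (chow_lift (mon_eval divisor_class m))" for m
    unfolding single_monomial_prod mon_eval_def
    by (intro keel_cong_lift_prod keel_cong_lift_power var_cong_lift) simp
  have "p = (\<Sum>m\<in>Poly_Mapping.keys p. const_poly (Poly_Mapping.lookup p m) * Poly_Mapping.single m 1)"
    by (subst poly_mapping_sum_single[of p]) (simp add: const_poly_def mult_single)
  moreover have "chow_lift (poly_eval divisor_class p) =
      (\<Sum>m\<in>Poly_Mapping.keys p. const_poly (Poly_Mapping.lookup p m) * chow_lift (mon_eval divisor_class m))"
    by (simp add: poly_eval_def chow_lift_sum chow_lift_simps)
  ultimately show ?thesis
    by (metis (no_types, lifting) keel_cong_mult_left keel_cong_sum mon)
qed

theorem keel_ideal_iff: "p \<in> keel_ideal 5 \<longleftrightarrow> poly_eval divisor_class p = (0 :: 'k::comm_ring_1 chow)"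
proof
  assume "poly_eval divisor_class p = 0"
  then show "p \<in> keel_ideal 5" using poly_cong_lift[of p] by (simp add: chow_lift_simps keel_cong_zero)
qed (rule poly_eval_keel_ideal)

section \<open>The linear resolution\<close>

lemma linear_form_add: "linear_form p \<Longrightarrow> linear_form q \<Longrightarrow> linear_form (p + q)"
  unfolding linear_form_def using keys_add[of p q] by blast

lemma linear_form_zero: "linear_form 0"
  by (simp add: linear_form_def)

lemma linear_form_sum: "(\<And>i. i \<in> S \<Longrightarrow> linear_form (f i)) \<Longrightarrow> linear_form (sum f S)"
  by (induction S rule: infinite_finite_induct) (auto intro: linear_form_add linear_form_zero)

lemma linear_form_const_mult_var: "linear_form (const_poly c * var S)"
  by (simp add: const_poly_def var_def mult_single linear_form_def mdeg_def)

lemma linear_form_const_mult_lin_basis: "linear_form (const_poly c * lin_basis x)"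
  by (simp add: lin_basis_def distrib_left linear_form_add linear_form_const_mult_var)

text \<open>The free module of rank \<open>rank i\<close> has a basis indexed by the normal words of length \<open>i\<close>.\<close>

definition rank :: "nat \<Rightarrow> nat" where
  "rank i = card (normal_words i)"

definition word_enum :: "nat \<Rightarrow> nat \<Rightarrow> nat list" where
  "word_enum i = (SOME f. bij_betw f {..<rank i} (normal_words i))"

lemma bij_word_enum: "bij_betw (word_enum i) {..<rank i} (normal_words i)"
proof -
  obtain h where "bij_betw h {0..<rank i} (normal_words i)"
    using ex_bij_betw_nat_finite[OF finite_normal_words] by (auto simp: rank_def)
  then have "\<exists>f. bij_betw f {..<rank i} (normal_words i)" by (auto simp: atLeast0LessThan)
  then show ?thesis unfolding word_enum_def by (rule someI_ex)
qed

lemma word_enum_in: "c < rank i \<Longrightarrow> word_enum i c \<in> normal_words i"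
  using bij_word_enum bij_betwE by blast

lemma word_enum_inj: "c < rank i \<Longrightarrow> c' < rank i \<Longrightarrow> word_enum i c = word_enum i c' \<Longrightarrow> c = c'"
  using bij_word_enum unfolding bij_betw_def inj_on_def by blast

lemma word_enum_surj: "w \<in> normal_words i \<Longrightarrow> \<exists>c<rank i. word_enum i c = w"
  using bij_word_enum[of i] unfolding bij_betw_def by (metis imageE lessThan_iff)

lemma sum_word_enum: "(\<Sum>c<rank i. g (word_enum i c)) = (\<Sum>w\<in>normal_words i. g w)"
  using sum.reindex_bij_betw[OF bij_word_enum, of g] .

lemma rank_0: "rank 0 = 1" and word_enum_0: "word_enum 0 0 = []"
  using word_enum_in[of 0 0] by (simp_all add: rank_def normal_words_0)

definition diff_matrix :: "nat \<Rightarrow> nat \<Rightarrow> nat \<Rightarrow> 'k::comm_ring_1 kpoly" where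
  "diff_matrix i r c = (\<Sum>x<5. const_poly (nf (x # word_enum i r) (word_enum (Suc i) c)) * lin_basis x)"

text \<open>A vector of polynomials read as an element of the Koszul complex: it prescribes the values on
  normal words, and \<open>nf\<close> extends them to all words.\<close>

definition cochain :: "nat \<Rightarrow> (nat \<Rightarrow> 'k::comm_ring_1 kpoly) \<Rightarrow> nat list \<Rightarrow> 'k chow" where
  "cochain n u z = (\<Sum>c<rank n. scalar (nf z (word_enum n c)) * poly_eval divisor_class (u c))"

lemma kills_relation_cochain: "kills_relation (cochain n u)"
  unfolding cochain_def[abs_def] by (intro kills_relation_sum finite_lessThan kills_relation_nf)

lemma cochain_word_enum:
  assumes "c0 < rank n"
  shows "cochain n u (word_enum n c0) = poly_eval divisor_class (u c0)"
proof -
  have "cochain n u (word_enum n c0) = (\<Sum>c<rank n. if c = c0 then poly_eval divisor_class (u c) else 0)"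
    unfolding cochain_def nf_normal[OF word_enum_in[OF assms]]
    by (rule sum.cong) (auto simp: delta_def word_enum_inj[OF _ assms])
  then show ?thesis using assms by simp
qed

lemma cochain_chow_lift:
  assumes "kills_relation S" and "z \<in> words n"
  shows "cochain n (\<lambda>c. chow_lift (S (word_enum n c))) z = S z"
proof -
  have "cochain n (\<lambda>c. chow_lift (S (word_enum n c))) z = (\<Sum>w\<in>normal_words n. scalar (nf z w) * S w)"
    using sum_word_enum[of "\<lambda>w. scalar (nf z w) * S w"] by (simp add: cochain_def poly_eval_chow_lift)
  also have "\<dots> = S z"
    using kills_relation_nf_expansion[OF assms(1)] assms(2) by (simp add: words_def)
  finally show ?thesis .
qed

lemma poly_eval_diff_matrix:
  "poly_eval divisor_class (mat_app (rank (Suc i)) (diff_matrix i) u r) =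
   koszul_diff (cochain (Suc i) u) (word_enum i r)"
proof -
  have entry: "poly_eval divisor_class (diff_matrix i r c) =
      (\<Sum>x<5. scalar (nf (x # word_enum i r) (word_enum (Suc i) c)) * gen x)" for c
    by (simp add: diff_matrix_def poly_eval_sum poly_eval_mult poly_eval_lin_basis del: nf.simps)
  have "poly_eval divisor_class (mat_app (rank (Suc i)) (diff_matrix i) u r) =
      (\<Sum>c<rank (Suc i). \<Sum>x<5. gen x * (scalar (nf (x # word_enum i r) (word_enum (Suc i) c)) *
        poly_eval divisor_class (u c)))"
    by (simp add: mat_app_def poly_eval_sum poly_eval_mult entry sum_distrib_left ac_simps del: nf.simps)
  also have "\<dots> = koszul_diff (cochain (Suc i) u) (word_enum i r)"
    unfolding koszul_diff_def cochain_def by (subst sum.swap) (simp add: sum_distrib_left del: nf.simps)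
  finally show ?thesis .
qed

lemma koszul_diff_cochain_chow_lift:
  assumes "kills_relation S" and "z \<in> words n"
  shows "koszul_diff (cochain (Suc n) (\<lambda>c. chow_lift (S (word_enum (Suc n) c)))) z = koszul_diff S z"
  using assms by (intro koszul_diff_cong cochain_chow_lift) (auto simp: words_def)

lemma diff_matrix_linear: "linear_form (diff_matrix i r c)"
  unfolding diff_matrix_def by (intro linear_form_sum linear_form_const_mult_lin_basis)

lemma diff_matrix_image_augmentation:
  "(\<exists>w. f - mat_app (rank 1) (diff_matrix 0) w 0 \<in> keel_ideal 5) \<longleftrightarrow>
   (\<exists>g. f - g \<in> keel_ideal 5 \<and> Poly_Mapping.lookup g 0 = (0 :: 'k::comm_ring_1))"
proof
  assume "\<exists>w. f - mat_app (rank 1) (diff_matrix 0) w 0 \<in> keel_ideal 5"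
  moreover have "Poly_Mapping.lookup (mat_app (rank 1) (diff_matrix 0) w 0) 0 = (0 :: 'k)" for w
    using poly_eval_diff_matrix[of 0 w 0]
    by (simp add: word_enum_0 flip: scal_poly_eval_divisor_class)
  ultimately show "\<exists>g. f - g \<in> keel_ideal 5 \<and> Poly_Mapping.lookup g 0 = 0" by blast
next
  assume "\<exists>g. f - g \<in> keel_ideal 5 \<and> Poly_Mapping.lookup g 0 = (0 :: 'k)"
  then obtain g where g: "f - g \<in> keel_ideal 5" "Poly_Mapping.lookup g 0 = (0 :: 'k)" by blast
  then have "scal (poly_eval divisor_class f) = 0"
    using keel_ideal_iff[of "f - g"] scal_poly_eval_divisor_class[of g] by (simp add: poly_eval_diff)
  then obtain S where S: "kills_relation S" "koszul_diff S [] = poly_eval divisor_class f"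
    using koszul_diff_onto_augmentation by blast
  define w where "w = (\<lambda>c. chow_lift (S (word_enum 1 c)))"
  have "poly_eval divisor_class (mat_app (rank 1) (diff_matrix 0) w 0) = poly_eval divisor_class f"
    using poly_eval_diff_matrix[of 0 w 0] koszul_diff_cochain_chow_lift[OF S(1), of "[]" 0] S(2)
    by (simp add: w_def word_enum_0 words_def)
  then have "f - mat_app (rank 1) (diff_matrix 0) w 0 \<in> keel_ideal 5"
    by (simp add: keel_ideal_iff poly_eval_diff)
  then show "\<exists>w. f - mat_app (rank 1) (diff_matrix 0) w 0 \<in> keel_ideal 5" by blast
qed

lemma diff_matrix_exact:
  fixes u :: "nat \<Rightarrow> 'k::comm_ring_1 kpoly"
  assumes "\<forall>r<rank i. mat_app (rank (Suc i)) (diff_matrix i) u r \<in> keel_ideal 5"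
  shows "\<exists>w. \<forall>j<rank (Suc i). u j - mat_app (rank (Suc (Suc i))) (diff_matrix (Suc i)) w j \<in> keel_ideal 5"
proof -
  let ?U = "cochain (Suc i) u"
  have "koszul_diff ?U w = 0" if "w \<in> normal_words i" for w
    using word_enum_surj[OF that] assms poly_eval_diff_matrix[of i u] keel_ideal_iff by metis
  then have "koszul_diff ?U z = 0" if "z \<in> words i" for z
    using koszul_diff_vanishes[OF kills_relation_cochain] that by blast
  then obtain S where S: "kills_relation S" "\<forall>z\<in>words (Suc i). koszul_diff S z = ?U z"
    using koszul_diff_exact[OF kills_relation_cochain] by blast
  define w where "w = (\<lambda>c. chow_lift (S (word_enum (Suc (Suc i)) c)))"
  have "u j - mat_app (rank (Suc (Suc i))) (diff_matrix (Suc i)) w j \<in> keel_ideal 5"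
    if j: "j < rank (Suc i)" for j
  proof -
    have wj: "word_enum (Suc i) j \<in> words (Suc i)"
      using word_enum_in[OF j] normal_words_subset_words by blast
    have "poly_eval divisor_class (mat_app (rank (Suc (Suc i))) (diff_matrix (Suc i)) w j) =
        koszul_diff S (word_enum (Suc i) j)"
      unfolding poly_eval_diff_matrix w_def by (rule koszul_diff_cochain_chow_lift[OF S(1) wj])
    also have "\<dots> = poly_eval divisor_class (u j)"
      using S(2) wj cochain_word_enum[OF j] by simp
    finally show ?thesis by (simp add: keel_ideal_iff poly_eval_diff)
  qed
  then show ?thesis by blast
qed

lemma diff_matrix_complex:
  fixes w :: "nat \<Rightarrow> 'k::comm_ring_1 kpoly"
  assumes "r < rank i"
  shows "mat_app (rank (Suc i)) (diff_matrix i)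
    (mat_app (rank (Suc (Suc i))) (diff_matrix (Suc i)) w) r \<in> keel_ideal 5"
proof -
  let ?v = "mat_app (rank (Suc (Suc i))) (diff_matrix (Suc i)) w"
  let ?Y = "koszul_diff (cochain (Suc (Suc i)) w)"
  have Y: "kills_relation ?Y" by (rule kills_relation_koszul_diff[OF kills_relation_cochain])
  have cochain_v: "cochain (Suc i) ?v z = ?Y z" if "z \<in> words (Suc i)" for z
  proof -
    have "cochain (Suc i) ?v z =
        (\<Sum>c<rank (Suc i). scalar (nf z (word_enum (Suc i) c)) * ?Y (word_enum (Suc i) c))"
      by (simp only: cochain_def poly_eval_diff_matrix)
    also have "\<dots> = (\<Sum>v\<in>normal_words (Suc i). scalar (nf z v) * ?Y v)"
      by (rule sum_word_enum)
    also have "\<dots> = ?Y z"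
      using kills_relation_nf_expansion[OF Y] that by (simp add: words_def)
    finally show ?thesis .
  qed
  have wr: "word_enum i r \<in> words i"
    using word_enum_in[OF assms] normal_words_subset_words by blast
  have "poly_eval divisor_class (mat_app (rank (Suc i)) (diff_matrix i) ?v r) =
      koszul_diff (cochain (Suc i) ?v) (word_enum i r)"
    by (rule poly_eval_diff_matrix)
  also have "\<dots> = koszul_diff ?Y (word_enum i r)"
    by (rule koszul_diff_cong) (simp add: cochain_v Cons_in_words[OF wr])
  also have "\<dots> = 0"
    using wr by (intro koszul_diff_square kills_relation_cochain) (simp add: words_def)
  finally show ?thesis by (simp add: keel_ideal_iff)
qed

theorem mainTheorem1:
  shows "koszul (keel_ideal 5 :: 'k::field kpoly set)"
  unfolding koszul_def linear_resolution_of_k_def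
  by (intro exI[of _ rank] exI[of _ diff_matrix] conjI allI impI rank_0 diff_matrix_linear
      diff_matrix_image_augmentation diff_matrix_exact diff_matrix_complex) auto

end
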